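(* Let $\mathbf Y\in\mathbb{R}^n$, $\mathbf X\in\mathbb{R}^n$, $\mathbf Z\in\mathbb{R}^{n\times p}$ with $p=p_n$. Let $\mathbf D^Y,\mathbf D^X\in\mathbb{R}^{n\times n}$ be known diagonal matrices and $\Lambda^Y,\Lambda^X\in\mathbb{R}^{p\times p}$ diagonal matrices such that every column of $\mathbf D^Y\mathbf Z\Lambda^Y$ and of $\mathbf D^X\mathbf Z\Lambda^X$ has squared Euclidean norm $n$. Suppose the $Y$-model $$\mathbf D^Y\mathbf Y=\mathbf D^Y\mathbf Z\Lambda^Y\beta^Y+\boldsymbol\varepsilon^Y$$ holds for some $\beta^Y\in\mathbb{R}^p$, where, conditional on $\mathbf Z$ (and the diagonal matrices), the components of $\boldsymbol\varepsilon^Y$ are independent $\mathcal N(0,\sigma_Y^2)$. Let $\lambda=A\sqrt{2\log(p)/n}$ for a fixed $A>1$, and define $$\hat\beta^Y\in\arg\min_{b\in\mathbb{R}^p}\{\|\mathbf D^Y(\mathbf Y-\mathbf Z\Lambda^Yb)\|_2/\sqrt n+\lambda\|b\|_1\},\qquad\tilde{\mathbf Y}=\mathbf Y-\mathbf Z\Lambda^Y\hat\beta^Y,$$ $$(\tilde\beta^Y,\tilde\eta^Y)\in\arg\min_{(b,u)\in\mathbb{R}^p\times\mathbb{R}^p}\{\|\mathbf D^Y(\tilde{\mathbf Y}-\mathbf Z\Lambda^Yb)-\mathbf D^X\mathbf Z\Lambda^Xu\|_2/\sqrt n+\lambda(\|b\|_1+\|u\|_1)\}.$$ Let $s_Y=|\{j:\beta^Y_j\neq0\}|$,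 and assume there is a constant $C'>0$ with $\mathbb{P}(\|\hat\beta^Y-\beta^Y\|_1>C's_Y\sqrt{\log(p)/n})\to0$, and that $s_Y\log(p)/n\to0$. Then there exists a constant $C>0$ such that $$\mathbb{P}\big(\|\tilde\beta^Y\|_1+\|\tilde\eta^Y\|_1\le C\|\beta^Y-\hat\beta^Y\|_1\big)\to1\quad\text{as }n\to\infty.$$
   Context: This is the heteroscedastic linear model setting: equivalently $Y_i=(Z_i^T\Lambda^Y\beta^Y)+\zeta_i$ with $\mathrm{Var}(\zeta_i\mid\mathbf Z)=\sigma_Y^2/(D^Y_{ii})^2$. All limits are as $n\to\infty$. *)

theory Defs
  imports "HOL-Probability.Probability"
begin

text \<open>Vectors in R^k are represented as functions nat => real, only the
 coordinates below k matter; matrices as nat => nat => real; diagonal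
 matrices by their diagonal nat => real.\<close>

definition l1norm :: "nat \<Rightarrow> (nat \<Rightarrow> real) \<Rightarrow> real" where
  "l1norm k v = (\<Sum>j<k. \<bar>v j\<bar>)"

definition l2norm :: "nat \<Rightarrow> (nat \<Rightarrow> real) \<Rightarrow> real" where
  "l2norm k v = sqrt (\<Sum>i<k. (v i)\<^sup>2)"

definition mat_diag_vec :: "nat \<Rightarrow> (nat \<Rightarrow> nat \<Rightarrow> real) \<Rightarrow> (nat \<Rightarrow> real) \<Rightarrow> (nat \<Rightarrow> real) \<Rightarrow> nat \<Rightarrow> real" where
  "mat_diag_vec p Z L b i = (\<Sum>j<p. Z i j * L j * b j)"

definition obj1 :: "nat \<Rightarrow> nat \<Rightarrow> real \<Rightarrow> (nat \<Rightarrow> real) \<Rightarrow> (nat \<Rightarrow> nat \<Rightarrow> real)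
   \<Rightarrow> (nat \<Rightarrow> real) \<Rightarrow> (nat \<Rightarrow> real) \<Rightarrow> (nat \<Rightarrow> real) \<Rightarrow> real" where
  "obj1 n p lam DY Z LY Y b =
     l2norm n (\<lambda>i. DY i * (Y i - mat_diag_vec p Z LY b i)) / sqrt n + lam * l1norm p b"

definition obj2 :: "nat \<Rightarrow> nat \<Rightarrow> real \<Rightarrow> (nat \<Rightarrow> real) \<Rightarrow> (nat \<Rightarrow> real) \<Rightarrow> (nat \<Rightarrow> nat \<Rightarrow> real)
   \<Rightarrow> (nat \<Rightarrow> real) \<Rightarrow> (nat \<Rightarrow> real) \<Rightarrow> (nat \<Rightarrow> real) \<Rightarrow> (nat \<Rightarrow> real) \<Rightarrow> (nat \<Rightarrow> real) \<Rightarrow> real" where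
  "obj2 n p lam DY DX Z LY LX Yt b u =
     l2norm n (\<lambda>i. DY i * (Yt i - mat_diag_vec p Z LY b i) - DX i * mat_diag_vec p Z LX u i) / sqrt n
     + lam * (l1norm p b + l1norm p u)"

text \<open>Coordinates of the conditioning information (Z, D^Y, D^X, Lambda^Y, Lambda^X).\<close>
datatype cidx = CZ nat nat | CDY nat | CDX nat | CLY nat | CLX nat | CE nat

definition cov_set :: "nat \<Rightarrow> nat \<Rightarrow> cidx set" where
  "cov_set n p = {CZ i j | i j. i < n \<and> j < p} \<union> CDY ` {..<n} \<union> CDX ` {..<n}
                 \<union> CLY ` {..<p} \<union> CLX ` {..<p}"

fun cov_val :: "(nat \<Rightarrow> nat \<Rightarrow> real) \<Rightarrow> (nat \<Rightarrow> real) \<Rightarrow> (nat \<Rightarrow> real) \<Rightarrow> (nat \<Rightarrow> real)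
   \<Rightarrow> (nat \<Rightarrow> real) \<Rightarrow> cidx \<Rightarrow> real" where
  "cov_val Z DY DX LY LX (CZ i j) = Z i j"
| "cov_val Z DY DX LY LX (CDY i) = DY i"
| "cov_val Z DY DX LY LX (CDX i) = DX i"
| "cov_val Z DY DX LY LX (CLY j) = LY j"
| "cov_val Z DY DX LY LX (CLX j) = LX j"
| "cov_val Z DY DX LY LX (CE i) = 0"

text \<open>The error vector, indexed by CE i (i < n), so that it lives in the same
 kind of product space as the covariates (needed for indep_var).\<close>
fun err_val :: "(nat \<Rightarrow> real) \<Rightarrow> cidx \<Rightarrow> real" where
  "err_val e (CE i) = e i"
| "err_val e _ = 0"

end

theory Submission
  imports Defs
begin

text \<open>
  Write \<open>\<epsilon>\<close> for the noise and \<open>c\<^sub>j\<close> for the normalized columns of both designs. On the event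
  that every score \<open>\<bar>\<langle>c\<^sub>j, \<epsilon>\<rangle>\<bar>\<close> is at most \<open>\<surd>\<rho> \<lambda> \<surd>n \<parallel>\<epsilon>\<parallel>\<close> and \<open>\<parallel>\<epsilon>\<parallel>\<^sup>2 > \<rho> n \<sigma>\<^sup>2\<close>, comparing
  the second-step objective at its minimizer with its value at \<open>(betaY - betahat, 0)\<close> and pairing
  the residual with \<open>\<epsilon>\<close> gives
  \<open>\<parallel>betatilde\<parallel>\<^sub>1 + \<parallel>etatilde\<parallel>\<^sub>1 \<le> (1 + \<surd>\<rho>) / (1 - \<surd>\<rho>) \<parallel>betaY - betahat\<parallel>\<^sub>1\<close>.
  As the covariates are independent of the Gaussian noise, each normalized score is exactly
  standard normal; a union bound over the \<open>2p\<close> columns and Chebyshev's inequality for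
  \<open>\<parallel>\<epsilon>\<parallel>\<^sup>2\<close> bound the failure probability by \<open>4 p\<^bsup>1 - \<rho>\<^sup>2A\<^sup>2\<^esup> + O(1/n)\<close>, which vanishes for
  \<open>1/A < \<rho> < 1\<close> as soon as \<open>p \<rightarrow> \<infinity>\<close>.

  That \<open>p \<rightarrow> \<infinity>\<close> (away from \<open>p = 0\<close>, where the claim is trivial) is forced by the assumed rate
  for \<open>betahat\<close>: for bounded \<open>p\<close>, the first-step optimality conditions would confine the standard
  normal score of the first column to a fixed interval whenever the rate holds, so the rate could
  not hold with probability tending to one.
\<close>

section \<open>Gaussian facts\<close>

lemma exp_mult_std_normal_density:
  "exp (t * x) * std_normal_density x = exp (t\<^sup>2 / 2) * normal_density t 1 x"
proof -
  have "exp (t * x) * exp (- x\<^sup>2 / 2) = exp (t\<^sup>2 / 2) * exp (- (x - t)\<^sup>2 / 2)"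
    unfolding mult_exp_exp by (rule arg_cong[where f = exp]) (simp add: field_simps power2_eq_square)
  then show ?thesis
    unfolding normal_density_def by simp
qed

lemma nn_integral_exp_mult_std_normal:
  "(\<integral>\<^sup>+x. ennreal (exp (t * x) * std_normal_density x) \<partial>lborel) = ennreal (exp (t\<^sup>2 / 2))"
proof -
  have "(\<integral>\<^sup>+x. ennreal (exp (t * x) * std_normal_density x) \<partial>lborel)
      = (\<integral>\<^sup>+x. ennreal (exp (t\<^sup>2 / 2)) * ennreal (normal_density t 1 x) \<partial>lborel)"
    by (simp add: exp_mult_std_normal_density ennreal_mult')
  also have "\<dots> = ennreal (exp (t\<^sup>2 / 2)) * (\<integral>\<^sup>+x. ennreal (normal_density t 1 x) \<partial>lborel)"
    by (rule nn_integral_cmult) simp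
  also have "(\<integral>\<^sup>+x. ennreal (normal_density t 1 x) \<partial>lborel) = 1"
    by (subst nn_integral_eq_integral) (auto simp: normal_density_nonneg)
  finally show ?thesis
    by simp
qed

lemma std_normal_two_sided_tail:
  assumes "t \<ge> 0"
  shows "measure (density lborel std_normal_density) {x. t < \<bar>x\<bar>} \<le> 2 * exp (- t\<^sup>2 / 2)"
proof -
  let ?f = "\<lambda>s x. exp (- t\<^sup>2) * (exp (s * x) * std_normal_density x)"
  interpret N: prob_space "density lborel std_normal_density"
    by (rule prob_space_normal_density) simp
  \<comment> \<open>Chernoff: the indicator of \<open>t < \<bar>x\<bar>\<close> is below \<open>exp (t x - t\<^sup>2) + exp (- t x - t\<^sup>2)\<close>.\<close>
  have indicator_le: "std_normal_density x * indicator {x. t < \<bar>x\<bar>} x \<le> ?f t x + ?f (- t) x" for x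
  proof (cases "t < \<bar>x\<bar>")
    case True
    then have "t * t \<le> t * x \<or> t * t \<le> t * (- x)"
    proof (cases "x > t")
      case False
      with True have "t \<le> - x"
        by linarith
      then have "t * t \<le> t * (- x)"
        using assms by (rule mult_left_mono)
      then show ?thesis
        by simp
    qed (use assms in \<open>simp add: mult_left_mono\<close>)
    then have "1 \<le> exp (- t\<^sup>2) * exp (t * x) + exp (- t\<^sup>2) * exp ((- t) * x)"
      unfolding mult_exp_exp by (auto simp: power2_eq_square add_increasing add_increasing2)
    from mult_right_mono[OF this normal_density_nonneg[of 0 1 x]] True show ?thesis
      by (simp add: algebra_simps)
  qed (simp add: normal_density_nonneg)
  have "emeasure (density lborel std_normal_density) {x. t < \<bar>x\<bar>}
      = (\<integral>\<^sup>+x. ennreal (std_normal_density x * indicator {x. t < \<bar>x\<bar>} x) \<partial>lborel)"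
    by (subst emeasure_density) (auto simp: ennreal_mult' intro!: nn_integral_cong split: split_indicator)
  also have "\<dots> \<le> (\<integral>\<^sup>+x. ennreal (?f t x) + ennreal (?f (- t) x) \<partial>lborel)"
    using indicator_le by (intro nn_integral_mono) (simp add: ennreal_plus[symmetric] del: ennreal_plus)
  also have "\<dots> = (\<integral>\<^sup>+x. ennreal (?f t x) \<partial>lborel) + (\<integral>\<^sup>+x. ennreal (?f (- t) x) \<partial>lborel)"
    by (rule nn_integral_add) auto
  also have "\<dots> = ennreal (exp (- t\<^sup>2) * exp (t\<^sup>2 / 2)) + ennreal (exp (- t\<^sup>2) * exp (t\<^sup>2 / 2))"
    using nn_integral_exp_mult_std_normal[of t] nn_integral_exp_mult_std_normal[of "- t"]
    by (simp add: ennreal_mult' nn_integral_cmult)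
  also have "ennreal (exp (- t\<^sup>2) * exp (t\<^sup>2 / 2)) + ennreal (exp (- t\<^sup>2) * exp (t\<^sup>2 / 2))
      = ennreal (2 * exp (- t\<^sup>2 / 2))"
    by (simp add: ennreal_plus[symmetric] mult_exp_exp del: ennreal_plus)
  finally show ?thesis
    by (simp add: N.emeasure_eq_measure ennreal_le_iff)
qed

lemma std_normal_centered_interval_lt_1:
  "measure (density lborel std_normal_density) {x. \<bar>x\<bar> \<le> K} < 1"
proof -
  let ?N = "density lborel std_normal_density"
  interpret N: prob_space ?N
    by (rule prob_space_normal_density) simp
  have "ennreal (std_normal_density (\<bar>K\<bar> + 1))
      = (\<integral>\<^sup>+x. ennreal (std_normal_density (\<bar>K\<bar> + 1)) * indicator {\<bar>K\<bar><..\<bar>K\<bar> + 1} x \<partial>lborel)"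
    by (subst nn_integral_cmult_indicator) auto
  also have "\<dots> \<le> (\<integral>\<^sup>+x. ennreal (std_normal_density x) * indicator {x. K < \<bar>x\<bar>} x \<partial>lborel)"
  proof (rule nn_integral_mono)
    fix x :: real
    show "ennreal (std_normal_density (\<bar>K\<bar> + 1)) * indicator {\<bar>K\<bar><..\<bar>K\<bar> + 1} x
        \<le> ennreal (std_normal_density x) * indicator {x. K < \<bar>x\<bar>} x"
    proof (cases "x \<in> {\<bar>K\<bar><..\<bar>K\<bar> + 1}")
      case True
      then have "x\<^sup>2 \<le> (\<bar>K\<bar> + 1)\<^sup>2"
        by (intro power_mono) auto
      then have "std_normal_density (\<bar>K\<bar> + 1) \<le> std_normal_density x"
        unfolding std_normal_density_def by (intro mult_left_mono) auto
      then show ?thesis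
        using True by (auto simp: indicator_def)
    qed simp
  qed
  also have "\<dots> = emeasure ?N {x. K < \<bar>x\<bar>}"
    by (subst emeasure_density) auto
  finally have "0 < measure ?N {x. K < \<bar>x\<bar>}"
    using normal_density_pos[of 1 0 "\<bar>K\<bar> + 1"] by (simp add: N.emeasure_eq_measure)
  moreover have "measure ?N {x. \<bar>x\<bar> \<le> K} = 1 - measure ?N {x. K < \<bar>x\<bar>}"
    using N.prob_compl[of "{x. K < \<bar>x\<bar>}"] by (simp add: not_less[symmetric] set_diff_eq)
  ultimately show ?thesis
    by simp
qed

lemma normalized_weighted_sum_std_normal:
  assumes "prob_space M"
    and indep: "prob_space.indep_vars M (\<lambda>_. borel) e {..<n}"
    and normal: "\<And>i. i < n \<Longrightarrow> distributed M lborel (e i) (normal_density 0 \<sigma>)"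
    and "\<sigma> > 0" and "n > 0"
    and weights: "(\<Sum>i<n. (a i)\<^sup>2) = real n"
  shows "distributed M lborel (\<lambda>\<omega>. (\<Sum>i<n. a i * e i \<omega>) / (\<sigma> * sqrt (real n))) std_normal_density"
proof -
  interpret prob_space M by fact
  define I where "I = {i. i < n \<and> a i \<noteq> 0}"
  have sum_I: "(\<Sum>i<n. a i * e i \<omega>) = (\<Sum>i\<in>I. a i * e i \<omega>)" for \<omega>
    by (rule sum.mono_neutral_right) (auto simp: I_def)
  have "(\<Sum>i<n. (a i)\<^sup>2) = (\<Sum>i\<in>I. (a i)\<^sup>2)"
    by (rule sum.mono_neutral_right) (auto simp: I_def)
  with weights have sq_I: "(\<Sum>i\<in>I. (a i)\<^sup>2) = real n"
    by simp
  have "I \<noteq> {}"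
    using sq_I \<open>n > 0\<close> by auto
  moreover have "indep_vars (\<lambda>_. borel) (\<lambda>i \<omega>. a i * e i \<omega>) I"
    by (rule indep_vars_compose2[where X = e and Y = "\<lambda>i x. a i * x", OF indep_vars_subset[OF indep]])
       (auto simp: I_def)
  moreover have "distributed M lborel (\<lambda>\<omega>. a i * e i \<omega>) (normal_density 0 (\<bar>a i\<bar> * \<sigma>))" if "i \<in> I" for i
    using normal_density_affine[OF normal \<open>\<sigma> > 0\<close>, of i "a i" 0] that by (simp add: I_def)
  ultimately have "distributed M lborel (\<lambda>\<omega>. \<Sum>i\<in>I. a i * e i \<omega>)
      (normal_density (\<Sum>i\<in>I. 0) (sqrt (\<Sum>i\<in>I. (\<bar>a i\<bar> * \<sigma>)\<^sup>2)))"
    using \<open>\<sigma> > 0\<close> by (intro sum_indep_normal) (auto simp: I_def)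
  moreover have "sqrt (\<Sum>i\<in>I. (\<bar>a i\<bar> * \<sigma>)\<^sup>2) = \<sigma> * sqrt (real n)"
  proof -
    have "(\<Sum>i\<in>I. (\<bar>a i\<bar> * \<sigma>)\<^sup>2) = \<sigma>\<^sup>2 * real n"
      using sq_I by (simp add: power_mult_distrib sum_distrib_left[symmetric] mult.commute)
    then show ?thesis
      using \<open>\<sigma> > 0\<close> by (simp add: real_sqrt_mult)
  qed
  ultimately show ?thesis
    using normal_standard_normal_convert[of "\<sigma> * sqrt (real n)"] \<open>\<sigma> > 0\<close> \<open>n > 0\<close> by (simp add: sum_I)
qed

text \<open>Condition on the covariates: every fibre is standard normal by the previous lemma.\<close>
lemma indep_weighted_sum_std_normal:
  fixes c ev :: "'a \<Rightarrow> cidx \<Rightarrow> real" and w :: "(cidx \<Rightarrow> real) \<Rightarrow> nat \<Rightarrow> real"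
  assumes "prob_space M"
    and indep_cov: "prob_space.indep_var M S c (Pi\<^sub>M (CE ` {..<n}) (\<lambda>_. borel)) ev"
    and ev_eq: "\<And>\<omega> i. \<omega> \<in> space M \<Longrightarrow> i < n \<Longrightarrow> ev \<omega> (CE i) = e i \<omega>"
    and indep: "prob_space.indep_vars M (\<lambda>_. borel) e {..<n}"
    and normal: "\<And>i. i < n \<Longrightarrow> distributed M lborel (e i) (normal_density 0 \<sigma>)"
    and "\<sigma> > 0" and "n > 0"
    and w_meas: "\<And>i. (\<lambda>x. w x i) \<in> borel_measurable S"
    and w_norm: "\<And>\<omega>. \<omega> \<in> space M \<Longrightarrow> (\<Sum>i<n. (w (c \<omega>) i)\<^sup>2) = real n"
    and "B \<in> sets borel"
  shows "measure M {\<omega> \<in> space M. (\<Sum>i<n. w (c \<omega>) i * e i \<omega>) / (\<sigma> * sqrt (real n)) \<in> B}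
      = measure (density lborel std_normal_density) B"
    and "{\<omega> \<in> space M. (\<Sum>i<n. w (c \<omega>) i * e i \<omega>) / (\<sigma> * sqrt (real n)) \<in> B} \<in> sets M"
proof -
  interpret prob_space M by fact
  let ?T = "Pi\<^sub>M (CE ` {..<n}) (\<lambda>_. borel) :: (cidx \<Rightarrow> real) measure"
  let ?N = "density lborel std_normal_density"
  let ?E = "{\<omega> \<in> space M. (\<Sum>i<n. w (c \<omega>) i * e i \<omega>) / (\<sigma> * sqrt (real n)) \<in> B}"
  have c_meas: "c \<in> measurable M S" and ev_meas: "ev \<in> measurable M ?T"
    using indep_var_rv1[OF indep_cov] indep_var_rv2[OF indep_cov] .
  \<comment> \<open>Replace the weights off the range of \<open>c\<close> by normalized ones, so that every fibre is Gaussian.\<close>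
  define w' where "w' x i = (if (\<Sum>i<n. (w x i)\<^sup>2) = real n then w x i else if i = 0 then sqrt (real n) else 0)"
    for x i
  have w'_norm: "(\<Sum>i<n. (w' x i)\<^sup>2) = real n" for x
  proof (cases "(\<Sum>i<n. (w x i)\<^sup>2) = real n")
    case False
    then have "(\<Sum>i<n. (w' x i)\<^sup>2) = (\<Sum>i<n. if i = 0 then real n else 0)"
      by (intro sum.cong) (auto simp: w'_def)
    then show ?thesis
      using \<open>n > 0\<close> by simp
  qed (simp add: w'_def)
  have w'_meas: "(\<lambda>x. w' x i) \<in> borel_measurable S" for i
    unfolding w'_def using w_meas by measurable
  define f where "f z = (\<Sum>i<n. w' (fst z) i * snd z (CE i)) / (\<sigma> * sqrt (real n))"
    for z :: "(cidx \<Rightarrow> real) \<times> (cidx \<Rightarrow> real)"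
  have f_meas: "f \<in> borel_measurable (S \<Otimes>\<^sub>M ?T)"
    unfolding f_def
  proof (intro borel_measurable_divide borel_measurable_sum borel_measurable_times borel_measurable_const)
    fix i assume "i \<in> {..<n}"
    show "(\<lambda>z. w' (fst z) i) \<in> borel_measurable (S \<Otimes>\<^sub>M ?T)"
      using w'_meas[of i] by measurable
    show "(\<lambda>z. snd z (CE i)) \<in> borel_measurable (S \<Otimes>\<^sub>M ?T)"
      using \<open>i \<in> {..<n}\<close>
      by (intro measurable_compose[OF measurable_snd] measurable_component_singleton) auto
  qed
  define A where "A = f -` B \<inter> space (S \<Otimes>\<^sub>M ?T)"
  have A: "A \<in> sets (S \<Otimes>\<^sub>M ?T)"
    unfolding A_def using f_meas \<open>B \<in> sets borel\<close> by (rule measurable_sets)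
  have E_eq: "?E = (\<lambda>\<omega>. (c \<omega>, ev \<omega>)) -` A \<inter> space M"
  proof -
    have "f (c \<omega>, ev \<omega>) = (\<Sum>i<n. w (c \<omega>) i * e i \<omega>) / (\<sigma> * sqrt (real n))" if "\<omega> \<in> space M" for \<omega>
      unfolding f_def using w_norm[OF that] ev_eq[OF that] by (auto simp: w'_def intro!: sum.cong)
    moreover have "(c \<omega>, ev \<omega>) \<in> space (S \<Otimes>\<^sub>M ?T)" if "\<omega> \<in> space M" for \<omega>
      using measurable_space[OF c_meas that] measurable_space[OF ev_meas that]
      by (simp add: space_pair_measure)
    ultimately show ?thesis
      unfolding A_def by auto
  qed
  show "?E \<in> sets M"
    unfolding E_eq by (rule measurable_sets[OF measurable_Pair[OF c_meas ev_meas] A])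
  interpret T: prob_space "distr M ?T ev"
    by (rule prob_space_distr[OF ev_meas])
  interpret C: prob_space "distr M S c"
    by (rule prob_space_distr[OF c_meas])
  have fibre: "emeasure (distr M ?T ev) (Pair x -` A) = emeasure ?N B" if "x \<in> space S" for x
  proof -
    have fibre_sets: "(\<lambda>y. f (x, y)) -` B \<inter> space ?T \<in> sets ?T"
      by (rule measurable_sets[OF measurable_Pair2[OF f_meas] \<open>B \<in> sets borel\<close>]) (use that in simp)
    have "Pair x -` A = (\<lambda>y. f (x, y)) -` B \<inter> space ?T"
      using that unfolding A_def by (auto simp: space_pair_measure)
    then have "emeasure (distr M ?T ev) (Pair x -` A)
        = emeasure M (ev -` ((\<lambda>y. f (x, y)) -` B \<inter> space ?T) \<inter> space M)"
      using emeasure_distr[OF ev_meas fibre_sets] by simp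
    also have "ev -` ((\<lambda>y. f (x, y)) -` B \<inter> space ?T) \<inter> space M
        = (\<lambda>\<omega>. (\<Sum>i<n. w' x i * e i \<omega>) / (\<sigma> * sqrt (real n))) -` B \<inter> space M"
      using measurable_space[OF ev_meas] ev_eq unfolding f_def by (auto intro!: sum.cong)
    also have "emeasure M \<dots> = emeasure ?N B"
      using distributed_emeasure[OF normalized_weighted_sum_std_normal[OF \<open>prob_space M\<close> indep normal
          \<open>\<sigma> > 0\<close> \<open>n > 0\<close> w'_norm]] \<open>B \<in> sets borel\<close>
      by (simp add: emeasure_density)
    finally show ?thesis .
  qed
  have "emeasure M ?E = emeasure (distr M (S \<Otimes>\<^sub>M ?T) (\<lambda>\<omega>. (c \<omega>, ev \<omega>))) A"
    unfolding E_eq by (rule emeasure_distr[symmetric]) (use c_meas ev_meas A in auto)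
  also have "distr M (S \<Otimes>\<^sub>M ?T) (\<lambda>\<omega>. (c \<omega>, ev \<omega>)) = distr M S c \<Otimes>\<^sub>M distr M ?T ev"
    using indep_cov unfolding indep_var_distribution_eq by simp
  also have "emeasure (distr M S c \<Otimes>\<^sub>M distr M ?T ev) A
      = (\<integral>\<^sup>+x. emeasure (distr M ?T ev) (Pair x -` A) \<partial>distr M S c)"
    by (rule T.emeasure_pair_measure_alt) (use A in simp)
  also have "\<dots> = (\<integral>\<^sup>+x. emeasure ?N B \<partial>distr M S c)"
    using fibre by (intro nn_integral_cong) simp
  also have "\<dots> = emeasure ?N B"
    using C.emeasure_space_1 by simp
  finally show "measure M ?E = measure ?N B"
    by (simp add: measure_def)
qed

lemma centered_normal_moments:
  assumes "prob_space M" and normal: "distributed M lborel X (normal_density 0 \<sigma>)" and "\<sigma> > 0"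
  shows "integrable M (\<lambda>\<omega>. X \<omega> ^ k)"
    and "(\<integral>\<omega>. X \<omega> ^ 2 \<partial>M) = \<sigma>\<^sup>2"
    and "(\<integral>\<omega>. X \<omega> ^ 4 \<partial>M) = 3 * \<sigma> ^ 4"
proof -
  show "integrable M (\<lambda>\<omega>. X \<omega> ^ k)"
    using distributed_integrable[OF normal, of "\<lambda>x. x ^ k"] integrable_normal_moment[of \<sigma> 0 k] \<open>\<sigma> > 0\<close>
    by auto
  have "(\<integral>\<omega>. X \<omega> ^ (2 * 1) \<partial>M) = fact (2 * 1) / ((2 / \<sigma>\<^sup>2) ^ 1 * fact 1)"
    using distributed_integral[OF normal, of "\<lambda>x. x ^ (2 * 1)"] integral_normal_moment_even[of \<sigma> 0 1]
      \<open>\<sigma> > 0\<close> by simp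
  then show "(\<integral>\<omega>. X \<omega> ^ 2 \<partial>M) = \<sigma>\<^sup>2"
    using \<open>\<sigma> > 0\<close> by (simp add: field_simps power2_eq_square)
  have "(\<integral>\<omega>. X \<omega> ^ (2 * 2) \<partial>M) = fact (2 * 2) / ((2 / \<sigma>\<^sup>2) ^ 2 * fact 2)"
    using distributed_integral[OF normal, of "\<lambda>x. x ^ (2 * 2)"] integral_normal_moment_even[of \<sigma> 0 2]
      \<open>\<sigma> > 0\<close> by simp
  then show "(\<integral>\<omega>. X \<omega> ^ 4 \<partial>M) = 3 * \<sigma> ^ 4"
    using \<open>\<sigma> > 0\<close> by (simp add: field_simps fact_numeral power2_eq_square power4_eq_xxxx)
qed

lemma indep_normal_centered_squares_product:
  assumes "prob_space M"
    and indep: "prob_space.indep_vars M (\<lambda>_. borel) e {..<n}"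
    and normal: "\<And>i. i < n \<Longrightarrow> distributed M lborel (e i) (normal_density 0 \<sigma>)"
    and "\<sigma> > 0" and "i < n" and "j < n"
  shows "integrable M (\<lambda>\<omega>. ((e i \<omega>)\<^sup>2 - \<sigma>\<^sup>2) * ((e j \<omega>)\<^sup>2 - \<sigma>\<^sup>2))"
    and "prob_space.expectation M (\<lambda>\<omega>. ((e i \<omega>)\<^sup>2 - \<sigma>\<^sup>2) * ((e j \<omega>)\<^sup>2 - \<sigma>\<^sup>2))
      = (if i = j then 2 * \<sigma> ^ 4 else 0)"
proof -
  interpret prob_space M by fact
  note moments = centered_normal_moments[OF \<open>prob_space M\<close> normal \<open>\<sigma> > 0\<close>]
  have [measurable]: "e k \<in> borel_measurable M" if "k < n" for k
    using distributed_measurable[OF normal[OF that]] by simp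
  have "(\<lambda>\<omega>. ((e i \<omega>)\<^sup>2 - \<sigma>\<^sup>2) * ((e j \<omega>)\<^sup>2 - \<sigma>\<^sup>2))
      = (\<lambda>\<omega>. (e i \<omega>)\<^sup>2 * (e j \<omega>)\<^sup>2 - \<sigma>\<^sup>2 * (e i \<omega>)\<^sup>2 - \<sigma>\<^sup>2 * (e j \<omega>)\<^sup>2 + \<sigma> ^ 4)"
    by (auto simp: fun_eq_iff algebra_simps power2_eq_square power4_eq_xxxx)
  moreover have "integrable M (\<lambda>\<omega>. (e i \<omega>)\<^sup>2 * (e j \<omega>)\<^sup>2)"
  proof (rule Bochner_Integration.integrable_bound)
    show "integrable M (\<lambda>\<omega>. e i \<omega> ^ 4 + e j \<omega> ^ 4)"
      using moments(1)[OF \<open>i < n\<close>, of 4] moments(1)[OF \<open>j < n\<close>, of 4] by simp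
    have "\<bar>x\<^sup>2 * y\<^sup>2\<bar> \<le> \<bar>x ^ 4 + y ^ 4\<bar>" for x y :: real
    proof -
      have "2 * (x\<^sup>2 * y\<^sup>2) \<le> x ^ 4 + y ^ 4" "0 \<le> x\<^sup>2 * y\<^sup>2"
        using sum_squares_bound[of "x\<^sup>2" "y\<^sup>2"] by (simp_all add: power_mult[symmetric])
      then show ?thesis
        by (smt (verit))
    qed
    then show "AE \<omega> in M. norm ((e i \<omega>)\<^sup>2 * (e j \<omega>)\<^sup>2) \<le> norm (e i \<omega> ^ 4 + e j \<omega> ^ 4)"
      by simp
  qed (use \<open>i < n\<close> \<open>j < n\<close> in measurable)
  ultimately show int: "integrable M (\<lambda>\<omega>. ((e i \<omega>)\<^sup>2 - \<sigma>\<^sup>2) * ((e j \<omega>)\<^sup>2 - \<sigma>\<^sup>2))"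
    using moments(1)[OF \<open>i < n\<close>, of 2] moments(1)[OF \<open>j < n\<close>, of 2] by simp
  show "expectation (\<lambda>\<omega>. ((e i \<omega>)\<^sup>2 - \<sigma>\<^sup>2) * ((e j \<omega>)\<^sup>2 - \<sigma>\<^sup>2)) = (if i = j then 2 * \<sigma> ^ 4 else 0)"
  proof (cases "i = j")
    case True
    have "(\<lambda>\<omega>. ((e i \<omega>)\<^sup>2 - \<sigma>\<^sup>2) * ((e i \<omega>)\<^sup>2 - \<sigma>\<^sup>2)) = (\<lambda>\<omega>. e i \<omega> ^ 4 - 2 * \<sigma>\<^sup>2 * (e i \<omega>)\<^sup>2 + \<sigma> ^ 4)"
      by (auto simp: fun_eq_iff algebra_simps power2_eq_square power4_eq_xxxx)
    then have "expectation (\<lambda>\<omega>. ((e i \<omega>)\<^sup>2 - \<sigma>\<^sup>2) * ((e i \<omega>)\<^sup>2 - \<sigma>\<^sup>2)) = 3 * \<sigma> ^ 4 - 2 * \<sigma>\<^sup>2 * \<sigma>\<^sup>2 + \<sigma> ^ 4"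
      using moments[OF \<open>i < n\<close>] moments(1)[OF \<open>i < n\<close>, of 4] moments(1)[OF \<open>i < n\<close>, of 2]
      by (simp add: prob_space)
    then show ?thesis
      using True by (simp add: power2_eq_square power4_eq_xxxx)
  next
    case False
    have "indep_vars (\<lambda>_. borel) (\<lambda>k \<omega>. (e k \<omega>)\<^sup>2 - \<sigma>\<^sup>2) {i, j}"
      by (rule indep_vars_compose2[where Y = "\<lambda>_ x. x\<^sup>2 - \<sigma>\<^sup>2", OF indep_vars_subset[OF indep]])
         (use \<open>i < n\<close> \<open>j < n\<close> in auto)
    then have "expectation (\<lambda>\<omega>. \<Prod>k\<in>{i, j}. (e k \<omega>)\<^sup>2 - \<sigma>\<^sup>2) = (\<Prod>k\<in>{i, j}. expectation (\<lambda>\<omega>. (e k \<omega>)\<^sup>2 - \<sigma>\<^sup>2))"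
      by (rule indep_vars_lebesgue_integral[rotated])
         (use \<open>i < n\<close> \<open>j < n\<close> moments(1)[of _ 2] in auto)
    moreover have "expectation (\<lambda>\<omega>. (e k \<omega>)\<^sup>2 - \<sigma>\<^sup>2) = 0" if "k < n" for k
      using moments[OF that] by (simp add: prob_space)
    ultimately show ?thesis
      using False \<open>i < n\<close> \<open>j < n\<close> by simp
  qed
qed

lemma indep_normal_sum_squares_deviation:
  assumes "prob_space M"
    and indep: "prob_space.indep_vars M (\<lambda>_. borel) e {..<n}"
    and normal: "\<And>i. i < n \<Longrightarrow> distributed M lborel (e i) (normal_density 0 \<sigma>)"
    and "\<sigma> > 0" and "a > 0"
  shows "measure M {\<omega> \<in> space M. a \<le> \<bar>(\<Sum>i<n. (e i \<omega>)\<^sup>2) - real n * \<sigma>\<^sup>2\<bar>} \<le> 2 * real n * \<sigma> ^ 4 / a\<^sup>2"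
proof -
  interpret prob_space M by fact
  note products = indep_normal_centered_squares_product[OF \<open>prob_space M\<close> indep normal \<open>\<sigma> > 0\<close>]
  note moments = centered_normal_moments[OF \<open>prob_space M\<close> normal \<open>\<sigma> > 0\<close>]
  define f where "f \<omega> = (\<Sum>i<n. (e i \<omega>)\<^sup>2)" for \<omega>
  have [measurable]: "e i \<in> borel_measurable M" if "i < n" for i
    using distributed_measurable[OF normal[OF that]] by simp
  have f_int: "integrable M f"
    unfolding f_def using moments(1) by (intro Bochner_Integration.integrable_sum) auto
  have f_mean: "expectation f = real n * \<sigma>\<^sup>2"
    unfolding f_def using moments by (subst Bochner_Integration.integral_sum) auto
  have deviation_sum: "f \<omega> - real n * \<sigma>\<^sup>2 = (\<Sum>i<n. (e i \<omega>)\<^sup>2 - \<sigma>\<^sup>2)" for \<omega>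
    unfolding f_def by (simp add: sum_subtractf)
  have deviation_sq: "(f \<omega> - real n * \<sigma>\<^sup>2)\<^sup>2 = (\<Sum>i<n. \<Sum>j<n. ((e i \<omega>)\<^sup>2 - \<sigma>\<^sup>2) * ((e j \<omega>)\<^sup>2 - \<sigma>\<^sup>2))"
    for \<omega>
    unfolding deviation_sum by (simp only: power2_eq_square sum_product)
  have deviation_int: "integrable M (\<lambda>\<omega>. (f \<omega> - real n * \<sigma>\<^sup>2)\<^sup>2)"
    unfolding deviation_sq using products(1) by (intro Bochner_Integration.integrable_sum) auto
  have "(\<lambda>\<omega>. (f \<omega>)\<^sup>2) = (\<lambda>\<omega>. (f \<omega> - real n * \<sigma>\<^sup>2)\<^sup>2 + 2 * (real n * \<sigma>\<^sup>2) * f \<omega> - (real n * \<sigma>\<^sup>2)\<^sup>2)"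
    by (auto simp: fun_eq_iff power2_eq_square algebra_simps)
  then have "integrable M (\<lambda>\<omega>. (f \<omega>)\<^sup>2)"
    using deviation_int f_int by simp
  from Chebyshev_inequality[OF _ this \<open>a > 0\<close>]
  have "prob {\<omega> \<in> space M. a \<le> \<bar>f \<omega> - expectation f\<bar>} \<le> variance f / a\<^sup>2"
    unfolding f_def by measurable
  moreover have "variance f = 2 * real n * \<sigma> ^ 4"
  proof -
    have "variance f = (\<Sum>i<n. expectation (\<lambda>\<omega>. \<Sum>j<n. ((e i \<omega>)\<^sup>2 - \<sigma>\<^sup>2) * ((e j \<omega>)\<^sup>2 - \<sigma>\<^sup>2)))"
      unfolding f_mean deviation_sq
      by (rule Bochner_Integration.integral_sum) (auto intro: products(1))
    also have "\<dots> = (\<Sum>i<n. \<Sum>j<n. expectation (\<lambda>\<omega>. ((e i \<omega>)\<^sup>2 - \<sigma>\<^sup>2) * ((e j \<omega>)\<^sup>2 - \<sigma>\<^sup>2)))"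
      by (intro sum.cong refl Bochner_Integration.integral_sum) (auto intro: products(1))
    also have "\<dots> = (\<Sum>i<n. \<Sum>j<n. if i = j then 2 * \<sigma> ^ 4 else 0)"
      using products(2) by (intro sum.cong refl) auto
    finally show ?thesis
      by (simp add: sum.delta)
  qed
  ultimately show ?thesis
    unfolding f_mean f_def by simp
qed

section \<open>Deterministic inequalities\<close>

lemma l2norm_eq_L2_set: "l2norm n v = L2_set v {..<n}"
  unfolding l2norm_def L2_set_def ..

lemma l2norm_nonneg: "0 \<le> l2norm n v"
  unfolding l2norm_def by (simp add: sum_nonneg)

lemma l1norm_nonneg: "0 \<le> l1norm p v"
  unfolding l1norm_def by (simp add: sum_nonneg)

lemma l2norm_power2: "(l2norm n v)\<^sup>2 = (\<Sum>i<n. (v i)\<^sup>2)"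
  unfolding l2norm_def by (simp add: sum_nonneg)

lemma l2norm_cong: "(\<And>i. i < n \<Longrightarrow> f i = g i) \<Longrightarrow> l2norm n f = l2norm n g"
  unfolding l2norm_def by (intro arg_cong[where f = sqrt] sum.cong) auto

lemma abs_sum_mult_le_l2norm: "\<bar>\<Sum>i<n. u i * v i\<bar> \<le> l2norm n u * l2norm n v"
proof -
  have "\<bar>\<Sum>i<n. u i * v i\<bar> \<le> (\<Sum>i<n. \<bar>u i\<bar> * \<bar>v i\<bar>)"
    by (rule order_trans[OF sum_abs]) (simp add: abs_mult)
  also have "\<dots> \<le> l2norm n u * l2norm n v"
    unfolding l2norm_eq_L2_set by (rule L2_set_mult_ineq)
  finally show ?thesis .
qed

lemma L2_set_sum_le:
  assumes "finite J"
  shows "L2_set (\<lambda>i. \<Sum>j\<in>J. f j i) A \<le> (\<Sum>j\<in>J. L2_set (f j) A)"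
  using assms
proof (induction J rule: finite_induct)
  case (insert x F)
  have "L2_set (\<lambda>i. \<Sum>j\<in>insert x F. f j i) A = L2_set (\<lambda>i. f x i + (\<Sum>j\<in>F. f j i)) A"
    using insert by simp
  also have "\<dots> \<le> L2_set (f x) A + L2_set (\<lambda>i. \<Sum>j\<in>F. f j i) A"
    by (rule L2_set_triangle_ineq)
  finally show ?case
    using insert by simp
qed (simp add: L2_set_def)

lemma l2norm_combination_le:
  assumes "\<And>j. j < p \<Longrightarrow> (\<Sum>i<n. (V j i)\<^sup>2) = real n"
  shows "l2norm n (\<lambda>i. \<Sum>j<p. d j * V j i) \<le> sqrt n * l1norm p d"
proof -
  have "l2norm n (\<lambda>i. \<Sum>j<p. d j * V j i) \<le> (\<Sum>j<p. L2_set (\<lambda>i. d j * V j i) {..<n})"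
    unfolding l2norm_eq_L2_set by (rule L2_set_sum_le) simp
  also have "\<dots> = (\<Sum>j<p. \<bar>d j\<bar> * sqrt n)"
  proof (intro sum.cong refl)
    fix j assume "j \<in> {..<p}"
    then have "L2_set (V j) {..<n} = sqrt n"
      using assms by (simp add: L2_set_def)
    then show "L2_set (\<lambda>i. d j * V j i) {..<n} = \<bar>d j\<bar> * sqrt n"
      by (simp add: L2_set_def power_mult_distrib sum_distrib_left[symmetric] real_sqrt_mult)
  qed
  also have "\<dots> = sqrt n * l1norm p d"
    unfolding l1norm_def sum_distrib_left by (simp add: mult.commute)
  finally show ?thesis .
qed

lemma abs_sum_mult_combination_le:
  assumes "\<And>j. j < p \<Longrightarrow> \<bar>\<Sum>i<n. V j i * e i\<bar> \<le> K"
  shows "\<bar>\<Sum>i<n. e i * (\<Sum>j<p. y j * V j i)\<bar> \<le> K * l1norm p y"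
proof -
  have "(\<Sum>i<n. e i * (\<Sum>j<p. y j * V j i)) = (\<Sum>j<p. y j * (\<Sum>i<n. V j i * e i))"
    by (simp add: sum_distrib_left sum.swap[of _ "{..<n}"] algebra_simps)
  also have "\<bar>\<dots>\<bar> \<le> (\<Sum>j<p. \<bar>y j\<bar> * K)"
    using assms by (intro order_trans[OF sum_abs] sum_mono) (auto simp: abs_mult intro: mult_left_mono)
  also have "\<dots> = K * l1norm p y"
    unfolding l1norm_def by (simp add: sum_distrib_left mult.commute)
  finally show ?thesis .
qed

lemma abs_sum_mult_normalized_combination_le:
  assumes "\<And>j. j < p \<Longrightarrow> (\<Sum>i<n. (V j i)\<^sup>2) = real n" and "(\<Sum>i<n. (w i)\<^sup>2) = real n"
  shows "\<bar>\<Sum>i<n. w i * (\<Sum>j<p. d j * V j i)\<bar> \<le> real n * l1norm p d"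
proof (rule abs_sum_mult_combination_le)
  fix j assume "j < p"
  have "\<bar>\<Sum>i<n. V j i * w i\<bar> \<le> l2norm n (V j) * l2norm n w"
    by (rule abs_sum_mult_le_l2norm)
  also have "\<dots> = real n"
    using assms \<open>j < p\<close> by (simp add: l2norm_def)
  finally show "\<bar>\<Sum>i<n. V j i * w i\<bar> \<le> real n" .
qed

text \<open>Pair \<open>g\<close> with \<open>e\<close> and use Cauchy--Schwarz on both sides.\<close>
lemma l2norm_residual_ge:
  assumes g: "\<And>i. i < n \<Longrightarrow> g i = e i - (\<Sum>j<p. y j * V j i) - (\<Sum>j<p. z j * W j i)"
    and V: "\<And>j. j < p \<Longrightarrow> \<bar>\<Sum>i<n. V j i * e i\<bar> \<le> K * l2norm n e"
    and W: "\<And>j. j < p \<Longrightarrow> \<bar>\<Sum>i<n. W j i * e i\<bar> \<le> K * l2norm n e"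
    and "K \<ge> 0"
  shows "l2norm n e - K * (l1norm p y + l1norm p z) \<le> l2norm n g"
proof (cases "l2norm n e = 0")
  case True
  then show ?thesis
    using \<open>K \<ge> 0\<close> l2norm_nonneg[of n g] l1norm_nonneg[of p y] l1norm_nonneg[of p z]
    by (simp add: order_trans[OF _ l2norm_nonneg])
next
  case False
  then have "l2norm n e > 0"
    using l2norm_nonneg[of n e] by linarith
  have "(\<Sum>i<n. e i * g i)
      = (\<Sum>i<n. (e i)\<^sup>2) - (\<Sum>i<n. e i * (\<Sum>j<p. y j * V j i)) - (\<Sum>i<n. e i * (\<Sum>j<p. z j * W j i))"
    by (simp add: g sum_subtractf power2_eq_square right_diff_distrib)
  moreover have "(\<Sum>i<n. e i * (\<Sum>j<p. y j * V j i)) \<le> K * l2norm n e * l1norm p y"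
    using abs_sum_mult_combination_le[OF V] by (simp add: abs_le_iff)
  moreover have "(\<Sum>i<n. e i * (\<Sum>j<p. z j * W j i)) \<le> K * l2norm n e * l1norm p z"
    using abs_sum_mult_combination_le[OF W] by (simp add: abs_le_iff)
  moreover have "(\<Sum>i<n. e i * g i) \<le> l2norm n e * l2norm n g"
    using abs_sum_mult_le_l2norm[where n = n and u = e and v = g] by linarith
  moreover have "(\<Sum>i<n. (e i)\<^sup>2) = l2norm n e * l2norm n e"
    using l2norm_power2[of n e] by (simp add: power2_eq_square)
  ultimately have "l2norm n e * (l2norm n e - K * (l1norm p y + l1norm p z)) \<le> l2norm n e * l2norm n g"
    by (simp add: algebra_simps)
  then show ?thesis
    using \<open>l2norm n e > 0\<close> by simp
qed

lemma joint_lasso_l1_le: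
  assumes g: "\<And>i. i < n \<Longrightarrow> g i = e i - (\<Sum>j<p. (b j - d j) * V j i) - (\<Sum>j<p. u j * W j i)"
    and V: "\<And>j. j < p \<Longrightarrow> \<bar>\<Sum>i<n. V j i * e i\<bar> \<le> c * lam * sqrt n * l2norm n e"
    and W: "\<And>j. j < p \<Longrightarrow> \<bar>\<Sum>i<n. W j i * e i\<bar> \<le> c * lam * sqrt n * l2norm n e"
    and "0 \<le> c" "c < 1" "lam > 0" "n > 0"
    and opt: "l2norm n g / sqrt n + lam * (l1norm p b + l1norm p u) \<le> l2norm n e / sqrt n + lam * l1norm p d"
  shows "l1norm p b + l1norm p u \<le> (1 + c) / (1 - c) * l1norm p d"
proof -
  have "sqrt n > 0"
    using \<open>n > 0\<close> by simp
  have "l2norm n e - c * lam * sqrt n * (l1norm p (\<lambda>j. b j - d j) + l1norm p u) \<le> l2norm n g"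
    using \<open>0 \<le> c\<close> \<open>lam > 0\<close> by (intro l2norm_residual_ge[OF g V W]) auto
  then have "(l2norm n e - c * lam * sqrt n * (l1norm p (\<lambda>j. b j - d j) + l1norm p u)) / sqrt n
      \<le> l2norm n g / sqrt n"
    using \<open>sqrt n > 0\<close> by (intro divide_right_mono) auto
  then have "l2norm n e / sqrt n - c * lam * (l1norm p (\<lambda>j. b j - d j) + l1norm p u) \<le> l2norm n g / sqrt n"
    using \<open>sqrt n > 0\<close> by (simp add: diff_divide_distrib)
  moreover have "l1norm p (\<lambda>j. b j - d j) \<le> l1norm p b + l1norm p d"
    unfolding l1norm_def by (simp add: sum.distrib[symmetric] sum_mono abs_triangle_ineq4)
  ultimately have "lam * (l1norm p b + l1norm p u) \<le> lam * l1norm p d + c * lam * (l1norm p b + l1norm p d + l1norm p u)"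
    using opt \<open>0 \<le> c\<close> \<open>lam > 0\<close> mult_left_mono[of "l1norm p (\<lambda>j. b j - d j)" "l1norm p b + l1norm p d" "c * lam"]
    by (simp add: algebra_simps)
  then have "lam * ((1 - c) * (l1norm p b + l1norm p u)) \<le> lam * ((1 + c) * l1norm p d)"
    by (simp add: algebra_simps)
  then have "(1 - c) * (l1norm p b + l1norm p u) \<le> (1 + c) * l1norm p d"
    using \<open>lam > 0\<close> by (rule mult_left_le_imp_le)
  then show ?thesis
    using \<open>c < 1\<close> by (simp add: field_simps)
qed

text \<open>
  A first-order condition for the square-root lasso, obtained by perturbing the fit along \<open>v\<close> by
  \<open>\<plusminus>1/\<surd>n\<close> in the direction of the score.
\<close>
lemma sqrt_lasso_score_le:
  assumes "n > 0" and v: "(\<Sum>i<n. (v i)\<^sup>2) = real n" and "L \<ge> 0"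
    and opt: "\<And>t. \<bar>t\<bar> = 1 / sqrt n \<Longrightarrow> l2norm n r - L * \<bar>t\<bar> \<le> l2norm n (\<lambda>i. r i - t * v i)"
  shows "\<bar>\<Sum>i<n. v i * r i\<bar> \<le> L * l2norm n r + L + sqrt n / 2"
proof -
  define a where "a = (\<Sum>i<n. v i * r i)"
  define t where "t = (if a \<ge> 0 then 1 / sqrt n else - 1 / sqrt n)"
  have "sqrt n > 0"
    using \<open>n > 0\<close> by simp
  have t_abs: "\<bar>t\<bar> = 1 / sqrt n"
    unfolding t_def using \<open>sqrt n > 0\<close> by auto
  have "(l2norm n (\<lambda>i. r i - t * v i))\<^sup>2 = (\<Sum>i<n. (r i)\<^sup>2 - 2 * t * (v i * r i) + t\<^sup>2 * (v i)\<^sup>2)"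
    unfolding l2norm_power2 by (intro sum.cong refl) (simp add: power2_eq_square algebra_simps)
  also have "\<dots> = (\<Sum>i<n. (r i)\<^sup>2) - 2 * t * a + t\<^sup>2 * (\<Sum>i<n. (v i)\<^sup>2)"
    unfolding a_def by (simp add: sum.distrib sum_subtractf sum_distrib_left)
  also have "\<dots> = (l2norm n r)\<^sup>2 - 2 * \<bar>a\<bar> / sqrt n + 1"
    using v \<open>n > 0\<close> by (auto simp: t_def l2norm_power2 power_divide)
  finally have perturbed: "(l2norm n (\<lambda>i. r i - t * v i))\<^sup>2 = (l2norm n r)\<^sup>2 - 2 * \<bar>a\<bar> / sqrt n + 1" .
  show ?thesis
  proof (cases "L / sqrt n \<le> l2norm n r")
    case True
    have "l2norm n r - L / sqrt n \<le> l2norm n (\<lambda>i. r i - t * v i)"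
      using opt[OF t_abs] t_abs by simp
    then have "(l2norm n r - L / sqrt n)\<^sup>2 \<le> (l2norm n (\<lambda>i. r i - t * v i))\<^sup>2"
      using True by (intro power_mono) auto
    then have "2 * \<bar>a\<bar> / sqrt n \<le> 2 * l2norm n r * L / sqrt n + 1"
      unfolding perturbed power2_diff by (smt (verit) zero_le_power2 times_divide_eq_right)
    then have "2 * \<bar>a\<bar> \<le> 2 * l2norm n r * L + sqrt n"
      using \<open>sqrt n > 0\<close> by (simp add: field_simps)
    then show ?thesis
      using \<open>L \<ge> 0\<close> unfolding a_def by (simp add: algebra_simps)
  next
    case False
    have "\<bar>a\<bar> \<le> l2norm n v * l2norm n r"
      unfolding a_def by (rule abs_sum_mult_le_l2norm)
    also have "\<dots> = sqrt n * l2norm n r"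
      using v by (simp add: l2norm_def)
    also have "\<dots> \<le> L"
      using False \<open>sqrt n > 0\<close> by (simp add: field_simps)
    finally show ?thesis
      using \<open>L \<ge> 0\<close> \<open>sqrt n > 0\<close> l2norm_nonneg[of n r] unfolding a_def
      by (smt (verit) mult_nonneg_nonneg divide_nonneg_nonneg)
  qed
qed

lemma mult_mat_diag_vec: "d * mat_diag_vec p Z L v i = (\<Sum>j<p. v j * (d * Z i j * L j))"
  unfolding mat_diag_vec_def sum_distrib_left by (intro sum.cong refl) (simp add: algebra_simps)

lemma weighted_residual_eq:
  assumes "d * y = d * mat_diag_vec p Z L \<beta> i + e"
  shows "d * (y - mat_diag_vec p Z L b i) = e + (\<Sum>j<p. (\<beta> j - b j) * (d * Z i j * L j))"
  using assms by (simp add: right_diff_distrib mult_mat_diag_vec sum_subtractf left_diff_distrib)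

lemma weighted_joint_residual_eq:
  assumes "d * y = d * mat_diag_vec p Z L \<beta> i + e"
  shows "d * ((y - mat_diag_vec p Z L b' i) - mat_diag_vec p Z L b i) - d' * mat_diag_vec p Z L' u i
      = e - (\<Sum>j<p. (b j - (\<beta> j - b' j)) * (d * Z i j * L j)) - (\<Sum>j<p. u j * (d' * Z i j * L' j))"
proof -
  have "d * ((y - mat_diag_vec p Z L b' i) - mat_diag_vec p Z L b i) - d' * mat_diag_vec p Z L' u i
      = d * y - d * mat_diag_vec p Z L b' i - d * mat_diag_vec p Z L b i - d' * mat_diag_vec p Z L' u i"
    by (simp add: algebra_simps)
  also have "\<dots> = e + (\<Sum>j<p. \<beta> j * (d * Z i j * L j)) - (\<Sum>j<p. b' j * (d * Z i j * L j))
      - (\<Sum>j<p. b j * (d * Z i j * L j)) - (\<Sum>j<p. u j * (d' * Z i j * L' j))"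
    unfolding assms mult_mat_diag_vec by simp
  also have "\<dots> = e - (\<Sum>j<p. (b j - (\<beta> j - b' j)) * (d * Z i j * L j)) - (\<Sum>j<p. u j * (d' * Z i j * L' j))"
    by (simp add: sum_subtractf sum.distrib algebra_simps)
  finally show ?thesis .
qed

lemma mat_diag_vec_add_first:
  assumes "p > 0"
  shows "mat_diag_vec p Z L (\<lambda>j. b j + (if j = 0 then t else 0)) i = mat_diag_vec p Z L b i + t * (Z i 0 * L 0)"
proof -
  have "(\<Sum>j<p. Z i j * L j * (if j = 0 then t else 0)) = (\<Sum>j<p. if j = 0 then Z i 0 * L 0 * t else 0)"
    by (rule sum.cong) auto
  also have "\<dots> = t * (Z i 0 * L 0)"
    using assms by simp
  finally show ?thesis
    unfolding mat_diag_vec_def distrib_left sum.distrib by simp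
qed

lemma l1norm_add_first_le: "l1norm p (\<lambda>j. b j + (if j = 0 then t else 0)) \<le> l1norm p b + \<bar>t\<bar>"
proof -
  have "l1norm p (\<lambda>j. b j + (if j = 0 then t else 0)) \<le> l1norm p b + (\<Sum>j<p. \<bar>if j = 0 then t else 0\<bar>)"
    unfolding l1norm_def sum.distrib[symmetric] by (intro sum_mono abs_triangle_ineq)
  also have "(\<Sum>j<p. \<bar>if j = 0 then t else 0\<bar>) \<le> \<bar>t\<bar>"
    by (simp add: if_distrib cong: if_cong)
  finally show ?thesis
    by simp
qed

section \<open>The two-step estimator at a fixed sample size\<close>

locale two_step_sqrt_lasso = prob_space M
  for M :: "'a measure" and n p :: nat
    and Y :: "'a \<Rightarrow> nat \<Rightarrow> real" and Z :: "'a \<Rightarrow> nat \<Rightarrow> nat \<Rightarrow> real"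
    and DY DX LY LX :: "'a \<Rightarrow> nat \<Rightarrow> real"
    and betaY :: "nat \<Rightarrow> real" and epsY :: "'a \<Rightarrow> nat \<Rightarrow> real" and sigmaY A :: real
    and betahat betatilde etatilde :: "'a \<Rightarrow> nat \<Rightarrow> real" +
  assumes norm_Y: "\<And>\<omega> j. \<omega> \<in> space M \<Longrightarrow> j < p \<Longrightarrow> (\<Sum>i<n. (DY \<omega> i * Z \<omega> i j * LY \<omega> j)\<^sup>2) = real n"
    and norm_X: "\<And>\<omega> j. \<omega> \<in> space M \<Longrightarrow> j < p \<Longrightarrow> (\<Sum>i<n. (DX \<omega> i * Z \<omega> i j * LX \<omega> j)\<^sup>2) = real n"
    and model: "\<And>\<omega> i. \<omega> \<in> space M \<Longrightarrow> i < n \<Longrightarrow>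
      DY \<omega> i * Y \<omega> i = DY \<omega> i * mat_diag_vec p (Z \<omega>) (LY \<omega>) betaY i + epsY \<omega> i"
    and sigma_pos: "sigmaY > 0"
    and eps_indep_cov: "indep_var
      (Pi\<^sub>M (cov_set n p) (\<lambda>_. borel)) (\<lambda>\<omega>. restrict (cov_val (Z \<omega>) (DY \<omega>) (DX \<omega>) (LY \<omega>) (LX \<omega>)) (cov_set n p))
      (Pi\<^sub>M (CE ` {..<n}) (\<lambda>_. borel)) (\<lambda>\<omega>. restrict (err_val (epsY \<omega>)) (CE ` {..<n}))"
    and eps_indep: "indep_vars (\<lambda>_. borel) (\<lambda>i \<omega>. epsY \<omega> i) {..<n}"
    and eps_normal: "\<And>i. i < n \<Longrightarrow> distributed M lborel (\<lambda>\<omega>. epsY \<omega> i) (normal_density 0 sigmaY)"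
    and A_gt: "A > 1"
    and betahat_meas: "\<And>j. (\<lambda>\<omega>. betahat \<omega> j) \<in> borel_measurable M"
    and betatilde_meas: "\<And>j. (\<lambda>\<omega>. betatilde \<omega> j) \<in> borel_measurable M"
    and etatilde_meas: "\<And>j. (\<lambda>\<omega>. etatilde \<omega> j) \<in> borel_measurable M"
    and betahat_min: "\<And>\<omega> b. \<omega> \<in> space M \<Longrightarrow>
      obj1 n p (A * sqrt (2 * ln (real p) / real n)) (DY \<omega>) (Z \<omega>) (LY \<omega>) (Y \<omega>) (betahat \<omega>)
      \<le> obj1 n p (A * sqrt (2 * ln (real p) / real n)) (DY \<omega>) (Z \<omega>) (LY \<omega>) (Y \<omega>) b"
    and tilde_min: "\<And>\<omega> b u. \<omega> \<in> space M \<Longrightarrow>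
      obj2 n p (A * sqrt (2 * ln (real p) / real n)) (DY \<omega>) (DX \<omega>) (Z \<omega>) (LY \<omega>) (LX \<omega>)
        (\<lambda>i. Y \<omega> i - mat_diag_vec p (Z \<omega>) (LY \<omega>) (betahat \<omega>) i) (betatilde \<omega>) (etatilde \<omega>)
      \<le> obj2 n p (A * sqrt (2 * ln (real p) / real n)) (DY \<omega>) (DX \<omega>) (Z \<omega>) (LY \<omega>) (LX \<omega>)
        (\<lambda>i. Y \<omega> i - mat_diag_vec p (Z \<omega>) (LY \<omega>) (betahat \<omega>) i) b u"
begin

abbreviation lam :: real where
  "lam \<equiv> A * sqrt (2 * ln (real p) / real n)"

definition colY :: "'a \<Rightarrow> nat \<Rightarrow> nat \<Rightarrow> real" where
  "colY \<omega> j i = DY \<omega> i * Z \<omega> i j * LY \<omega> j"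

definition colX :: "'a \<Rightarrow> nat \<Rightarrow> nat \<Rightarrow> real" where
  "colX \<omega> j i = DX \<omega> i * Z \<omega> i j * LX \<omega> j"

definition cov :: "'a \<Rightarrow> cidx \<Rightarrow> real" where
  "cov \<omega> = restrict (cov_val (Z \<omega>) (DY \<omega>) (DX \<omega>) (LY \<omega>) (LX \<omega>)) (cov_set n p)"

definition covariate_determined :: "('a \<Rightarrow> nat \<Rightarrow> real) \<Rightarrow> bool" where
  "covariate_determined v \<longleftrightarrow> (\<exists>w. (\<forall>i. (\<lambda>x. w x i) \<in> borel_measurable (Pi\<^sub>M (cov_set n p) (\<lambda>_. borel)))
     \<and> (\<forall>\<omega>\<in>space M. \<forall>i<n. v \<omega> i = w (cov \<omega>) i))"

lemma sum_colY_square: "\<omega> \<in> space M \<Longrightarrow> j < p \<Longrightarrow> (\<Sum>i<n. (colY \<omega> j i)\<^sup>2) = real n"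
  unfolding colY_def by (rule norm_Y)

lemma sum_colX_square: "\<omega> \<in> space M \<Longrightarrow> j < p \<Longrightarrow> (\<Sum>i<n. (colX \<omega> j i)\<^sup>2) = real n"
  unfolding colX_def by (rule norm_X)

lemma lam_pos: "n > 0 \<Longrightarrow> p \<ge> 2 \<Longrightarrow> lam > 0"
  using A_gt by simp

lemma lam_mult_sqrt: "n > 0 \<Longrightarrow> lam * sqrt n = A * sqrt (2 * ln (real p))"
  by (simp add: real_sqrt_divide)

lemma covariate_determined_product:
  assumes "\<And>i. i < n \<Longrightarrow> {f i, g i, h} \<subseteq> cov_set n p"
  shows "covariate_determined (\<lambda>\<omega> i. cov \<omega> (f i) * cov \<omega> (g i) * cov \<omega> h)"
  unfolding covariate_determined_def
proof (intro exI[of _ "\<lambda>x i. if i < n then x (f i) * x (g i) * x h else 0"] conjI allI ballI impI)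
  fix i
  show "(\<lambda>x :: cidx \<Rightarrow> real. if i < n then x (f i) * x (g i) * x h else 0) \<in> borel_measurable (Pi\<^sub>M (cov_set n p) (\<lambda>_. borel))"
  proof (cases "i < n")
    case True
    have "(\<lambda>x :: cidx \<Rightarrow> real. x (f i) * x (g i) * x h) \<in> borel_measurable (Pi\<^sub>M (cov_set n p) (\<lambda>_. borel))"
    proof -
      have "f i \<in> cov_set n p" "g i \<in> cov_set n p" "h \<in> cov_set n p"
        using assms[OF True] by auto
      then show ?thesis
        by measurable
    qed
    then show ?thesis
      using True by simp
  qed simp
qed simp

lemma covariate_determined_colY: "j < p \<Longrightarrow> covariate_determined (\<lambda>\<omega>. colY \<omega> j)"
proof -
  assume "j < p"
  then have "covariate_determined (\<lambda>\<omega> i. cov \<omega> (CDY i) * cov \<omega> (CZ i j) * cov \<omega> (CLY j))"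
    by (intro covariate_determined_product) (auto simp: cov_set_def)
  moreover have "cov \<omega> (CDY i) * cov \<omega> (CZ i j) * cov \<omega> (CLY j) = colY \<omega> j i" if "i < n" for \<omega> i
    using that \<open>j < p\<close> by (auto simp: cov_def cov_set_def colY_def)
  ultimately show ?thesis
    unfolding covariate_determined_def by auto
qed

lemma covariate_determined_colX: "j < p \<Longrightarrow> covariate_determined (\<lambda>\<omega>. colX \<omega> j)"
proof -
  assume "j < p"
  then have "covariate_determined (\<lambda>\<omega> i. cov \<omega> (CDX i) * cov \<omega> (CZ i j) * cov \<omega> (CLX j))"
    by (intro covariate_determined_product) (auto simp: cov_set_def)
  moreover have "cov \<omega> (CDX i) * cov \<omega> (CZ i j) * cov \<omega> (CLX j) = colX \<omega> j i" if "i < n" for \<omega> i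
    using that \<open>j < p\<close> by (auto simp: cov_def cov_set_def colX_def)
  ultimately show ?thesis
    unfolding covariate_determined_def by auto
qed

lemma noise_score_std_normal:
  assumes "covariate_determined v" and v_norm: "\<And>\<omega>. \<omega> \<in> space M \<Longrightarrow> (\<Sum>i<n. (v \<omega> i)\<^sup>2) = real n"
    and "n > 0" and "B \<in> sets borel"
  shows "prob {\<omega> \<in> space M. (\<Sum>i<n. v \<omega> i * epsY \<omega> i) / (sigmaY * sqrt n) \<in> B}
      = measure (density lborel std_normal_density) B"
    and "{\<omega> \<in> space M. (\<Sum>i<n. v \<omega> i * epsY \<omega> i) / (sigmaY * sqrt n) \<in> B} \<in> events"
proof -
  obtain w where w_meas: "\<And>i. (\<lambda>x. w x i) \<in> borel_measurable (Pi\<^sub>M (cov_set n p) (\<lambda>_. borel))"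
    and v_eq: "\<And>\<omega> i. \<omega> \<in> space M \<Longrightarrow> i < n \<Longrightarrow> v \<omega> i = w (cov \<omega>) i"
    using \<open>covariate_determined v\<close> unfolding covariate_determined_def by blast
  have "(\<Sum>i<n. v \<omega> i * epsY \<omega> i) = (\<Sum>i<n. w (cov \<omega>) i * epsY \<omega> i)"
    and "(\<Sum>i<n. (v \<omega> i)\<^sup>2) = (\<Sum>i<n. (w (cov \<omega>) i)\<^sup>2)" if "\<omega> \<in> space M" for \<omega>
    using v_eq[OF that] by (auto intro: sum.cong)
  then have event_eq: "{\<omega> \<in> space M. (\<Sum>i<n. v \<omega> i * epsY \<omega> i) / (sigmaY * sqrt n) \<in> B}
      = {\<omega> \<in> space M. (\<Sum>i<n. w (cov \<omega>) i * epsY \<omega> i) / (sigmaY * sqrt n) \<in> B}"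
    and w_norm: "\<And>\<omega>. \<omega> \<in> space M \<Longrightarrow> (\<Sum>i<n. (w (cov \<omega>) i)\<^sup>2) = real n"
    using v_norm by auto
  note fibres = indep_weighted_sum_std_normal[where e = "\<lambda>i \<omega>. epsY \<omega> i",
      OF prob_space_axioms eps_indep_cov[folded cov_def] _ eps_indep eps_normal sigma_pos \<open>n > 0\<close>
      w_meas w_norm \<open>B \<in> sets borel\<close>]
  show "prob {\<omega> \<in> space M. (\<Sum>i<n. v \<omega> i * epsY \<omega> i) / (sigmaY * sqrt n) \<in> B}
      = measure (density lborel std_normal_density) B"
    unfolding event_eq by (rule fibres(1)) simp
  show "{\<omega> \<in> space M. (\<Sum>i<n. v \<omega> i * epsY \<omega> i) / (sigmaY * sqrt n) \<in> B} \<in> events"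
    unfolding event_eq by (rule fibres(2)) simp
qed

lemma noise_energy_deviation:
  assumes "a > 0"
  shows "prob {\<omega> \<in> space M. a \<le> \<bar>(\<Sum>i<n. (epsY \<omega> i)\<^sup>2) - real n * sigmaY\<^sup>2\<bar>} \<le> 2 * real n * sigmaY ^ 4 / a\<^sup>2"
    and "{\<omega> \<in> space M. a \<le> \<bar>(\<Sum>i<n. (epsY \<omega> i)\<^sup>2) - real n * sigmaY\<^sup>2\<bar>} \<in> events"
proof -
  show "prob {\<omega> \<in> space M. a \<le> \<bar>(\<Sum>i<n. (epsY \<omega> i)\<^sup>2) - real n * sigmaY\<^sup>2\<bar>} \<le> 2 * real n * sigmaY ^ 4 / a\<^sup>2"
    by (rule indep_normal_sum_squares_deviation[OF prob_space_axioms eps_indep eps_normal sigma_pos \<open>a > 0\<close>])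
  have [measurable]: "(\<lambda>\<omega>. epsY \<omega> i) \<in> borel_measurable M" if "i < n" for i
    using distributed_measurable[OF eps_normal[OF that]] by simp
  show "{\<omega> \<in> space M. a \<le> \<bar>(\<Sum>i<n. (epsY \<omega> i)\<^sup>2) - real n * sigmaY\<^sup>2\<bar>} \<in> events"
    by measurable
qed

lemma noise_score_tail:
  assumes "covariate_determined v" and "\<And>\<omega>. \<omega> \<in> space M \<Longrightarrow> (\<Sum>i<n. (v \<omega> i)\<^sup>2) = real n"
    and "n > 0" and "p \<ge> 2" and "\<rho> \<ge> 0"
  shows "prob {\<omega> \<in> space M. \<rho> * A * sqrt (2 * ln (real p)) < \<bar>(\<Sum>i<n. v \<omega> i * epsY \<omega> i) / (sigmaY * sqrt n)\<bar>}
      \<le> 2 * real p powr (- (\<rho>\<^sup>2 * A\<^sup>2))"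
    and "{\<omega> \<in> space M. \<rho> * A * sqrt (2 * ln (real p)) < \<bar>(\<Sum>i<n. v \<omega> i * epsY \<omega> i) / (sigmaY * sqrt n)\<bar>}
      \<in> events"
proof -
  define t where "t = \<rho> * A * sqrt (2 * ln (real p))"
  have "{x. t < \<bar>x\<bar>} \<in> sets borel"
    by measurable
  then have score: "prob {\<omega> \<in> space M. (\<Sum>i<n. v \<omega> i * epsY \<omega> i) / (sigmaY * sqrt n) \<in> {x. t < \<bar>x\<bar>}}
        = measure (density lborel std_normal_density) {x. t < \<bar>x\<bar>}"
      "{\<omega> \<in> space M. (\<Sum>i<n. v \<omega> i * epsY \<omega> i) / (sigmaY * sqrt n) \<in> {x. t < \<bar>x\<bar>}} \<in> events"
    using noise_score_std_normal[OF assms(1)] assms(2,3) by blast+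
  have "ln (real p) > 0"
    using \<open>p \<ge> 2\<close> by simp
  then have "t \<ge> 0"
    using \<open>\<rho> \<ge> 0\<close> A_gt by (simp add: t_def)
  have "- t\<^sup>2 / 2 = - (\<rho>\<^sup>2 * A\<^sup>2) * ln (real p)"
    using \<open>ln (real p) > 0\<close> by (simp add: t_def power_mult_distrib)
  then have "exp (- t\<^sup>2 / 2) = real p powr (- (\<rho>\<^sup>2 * A\<^sup>2))"
    using \<open>p \<ge> 2\<close> unfolding powr_def by simp
  moreover have event_eq: "{\<omega> \<in> space M. t < \<bar>(\<Sum>i<n. v \<omega> i * epsY \<omega> i) / (sigmaY * sqrt n)\<bar>}
      = {\<omega> \<in> space M. (\<Sum>i<n. v \<omega> i * epsY \<omega> i) / (sigmaY * sqrt n) \<in> {x. t < \<bar>x\<bar>}}"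
    by simp
  ultimately show "prob {\<omega> \<in> space M. \<rho> * A * sqrt (2 * ln (real p)) < \<bar>(\<Sum>i<n. v \<omega> i * epsY \<omega> i) / (sigmaY * sqrt n)\<bar>}
      \<le> 2 * real p powr (- (\<rho>\<^sup>2 * A\<^sup>2))"
    using std_normal_two_sided_tail[OF \<open>t \<ge> 0\<close>] score(1) unfolding t_def[symmetric] event_eq by linarith
  show "{\<omega> \<in> space M. \<rho> * A * sqrt (2 * ln (real p)) < \<bar>(\<Sum>i<n. v \<omega> i * epsY \<omega> i) / (sigmaY * sqrt n)\<bar>}
      \<in> events"
    unfolding t_def[symmetric] event_eq by (rule score(2))
qed

lemma joint_l1_le_of_small_scores:
  assumes "\<omega> \<in> space M" and "n > 0" and "p \<ge> 2" and "0 \<le> c" and "c < 1"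
    and Y_small: "\<And>j. j < p \<Longrightarrow> \<bar>\<Sum>i<n. colY \<omega> j i * epsY \<omega> i\<bar> \<le> c * lam * sqrt n * l2norm n (epsY \<omega>)"
    and X_small: "\<And>j. j < p \<Longrightarrow> \<bar>\<Sum>i<n. colX \<omega> j i * epsY \<omega> i\<bar> \<le> c * lam * sqrt n * l2norm n (epsY \<omega>)"
  shows "l1norm p (betatilde \<omega>) + l1norm p (etatilde \<omega>)
      \<le> (1 + c) / (1 - c) * l1norm p (\<lambda>j. betaY j - betahat \<omega> j)"
proof -
  define d where "d j = betaY j - betahat \<omega> j" for j
  define Yt where "Yt = (\<lambda>i. Y \<omega> i - mat_diag_vec p (Z \<omega>) (LY \<omega>) (betahat \<omega>) i)"
  have "DY \<omega> i * (Yt i - mat_diag_vec p (Z \<omega>) (LY \<omega>) b i) - DX \<omega> i * mat_diag_vec p (Z \<omega>) (LX \<omega>) u i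
      = epsY \<omega> i - (\<Sum>j<p. (b j - d j) * colY \<omega> j i) - (\<Sum>j<p. u j * colX \<omega> j i)"
    if "i < n" for b u i
    unfolding Yt_def d_def colY_def colX_def
    by (rule weighted_joint_residual_eq[OF model[OF \<open>\<omega> \<in> space M\<close> that]])
  then have obj2_eq: "obj2 n p lam (DY \<omega>) (DX \<omega>) (Z \<omega>) (LY \<omega>) (LX \<omega>) Yt b u
      = l2norm n (\<lambda>i. epsY \<omega> i - (\<Sum>j<p. (b j - d j) * colY \<omega> j i) - (\<Sum>j<p. u j * colX \<omega> j i)) / sqrt n
        + lam * (l1norm p b + l1norm p u)" for b u
    unfolding obj2_def by (subst l2norm_cong) auto
  have "l1norm p (\<lambda>_. 0) = 0"
    by (simp add: l1norm_def)
  then have "l2norm n (\<lambda>i. epsY \<omega> i - (\<Sum>j<p. (betatilde \<omega> j - d j) * colY \<omega> j i)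
        - (\<Sum>j<p. etatilde \<omega> j * colX \<omega> j i)) / sqrt n
      + lam * (l1norm p (betatilde \<omega>) + l1norm p (etatilde \<omega>))
      \<le> l2norm n (epsY \<omega>) / sqrt n + lam * l1norm p d"
    using tilde_min[OF \<open>\<omega> \<in> space M\<close>, of d "\<lambda>_. 0"] unfolding Yt_def[symmetric] obj2_eq by simp
  from joint_lasso_l1_le[OF _ Y_small X_small \<open>0 \<le> c\<close> \<open>c < 1\<close> lam_pos[OF \<open>n > 0\<close> \<open>p \<ge> 2\<close>] \<open>n > 0\<close> this]
  show ?thesis
    unfolding d_def by simp
qed

lemma joint_l1_le_on_good_event:
  assumes "\<omega> \<in> space M" and "n > 0" and "p \<ge> 2" and "0 < \<rho>" and "\<rho> < 1"
    and energy: "\<rho> * real n * sigmaY\<^sup>2 < (\<Sum>i<n. (epsY \<omega> i)\<^sup>2)"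
    and Y_small: "\<And>j. j < p \<Longrightarrow>
      \<bar>(\<Sum>i<n. colY \<omega> j i * epsY \<omega> i) / (sigmaY * sqrt n)\<bar> \<le> \<rho> * A * sqrt (2 * ln (real p))"
    and X_small: "\<And>j. j < p \<Longrightarrow>
      \<bar>(\<Sum>i<n. colX \<omega> j i * epsY \<omega> i) / (sigmaY * sqrt n)\<bar> \<le> \<rho> * A * sqrt (2 * ln (real p))"
  shows "l1norm p (betatilde \<omega>) + l1norm p (etatilde \<omega>)
      \<le> (1 + sqrt \<rho>) / (1 - sqrt \<rho>) * l1norm p (\<lambda>j. betaY j - betahat \<omega> j)"
proof (rule joint_l1_le_of_small_scores[OF \<open>\<omega> \<in> space M\<close> \<open>n > 0\<close> \<open>p \<ge> 2\<close>])
  have "sigmaY * sqrt n > 0"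
    using sigma_pos \<open>n > 0\<close> by simp
  have "sqrt (\<rho> * real n * sigmaY\<^sup>2) \<le> l2norm n (epsY \<omega>)"
    using energy unfolding l2norm_def by simp
  then have energy_sqrt: "sqrt \<rho> * sigmaY * sqrt n \<le> l2norm n (epsY \<omega>)"
    using sigma_pos \<open>0 < \<rho>\<close> by (simp add: real_sqrt_mult mult_ac)
  \<comment> \<open>The threshold factors as \<open>\<surd>\<rho> \<cdot> \<lambda>\<surd>n \<cdot> \<surd>\<rho> \<sigma> \<surd>n\<close>, and the last factor is at most \<open>\<parallel>\<epsilon>\<parallel>\<close>.\<close>
  have "\<rho> * A * sqrt (2 * ln (real p)) * (sigmaY * sqrt n)
      = (sqrt \<rho> * sqrt \<rho>) * (A * sqrt (2 * ln (real p))) * (sigmaY * sqrt n)"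
    using \<open>0 < \<rho>\<close> by simp
  also have "\<dots> = sqrt \<rho> * (lam * sqrt n) * (sqrt \<rho> * sigmaY * sqrt n)"
    unfolding lam_mult_sqrt[OF \<open>n > 0\<close>] by (simp only: mult_ac)
  also have "\<dots> \<le> sqrt \<rho> * (lam * sqrt n) * l2norm n (epsY \<omega>)"
    using energy_sqrt lam_pos[OF \<open>n > 0\<close> \<open>p \<ge> 2\<close>] \<open>0 < \<rho>\<close> by (intro mult_left_mono) auto
  finally have threshold: "\<rho> * A * sqrt (2 * ln (real p)) * (sigmaY * sqrt n) \<le> sqrt \<rho> * lam * sqrt n * l2norm n (epsY \<omega>)"
    by (simp add: algebra_simps)
  have small: "\<bar>s\<bar> \<le> sqrt \<rho> * lam * sqrt n * l2norm n (epsY \<omega>)"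
    if "\<bar>s / (sigmaY * sqrt n)\<bar> \<le> \<rho> * A * sqrt (2 * ln (real p))" for s
  proof -
    have "\<bar>s\<bar> \<le> \<rho> * A * sqrt (2 * ln (real p)) * (sigmaY * sqrt n)"
      using that \<open>sigmaY * sqrt n > 0\<close> by (simp add: abs_divide field_simps)
    then show ?thesis
      using threshold by linarith
  qed
  show "\<bar>\<Sum>i<n. colY \<omega> j i * epsY \<omega> i\<bar> \<le> sqrt \<rho> * lam * sqrt n * l2norm n (epsY \<omega>)" if "j < p" for j
    using small Y_small[OF that] by blast
  show "\<bar>\<Sum>i<n. colX \<omega> j i * epsY \<omega> i\<bar> \<le> sqrt \<rho> * lam * sqrt n * l2norm n (epsY \<omega>)" if "j < p" for j
    using small X_small[OF that] by blast
qed (use \<open>0 < \<rho>\<close> \<open>\<rho> < 1\<close> in auto)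

lemma prob_joint_l1_le:
  assumes "n > 0" and "p \<ge> 2" and "0 < \<rho>" and "\<rho> < 1"
  shows "1 - 2 / ((1 - \<rho>)\<^sup>2 * real n) - 4 * real p powr (1 - \<rho>\<^sup>2 * A\<^sup>2)
      \<le> prob {\<omega> \<in> space M. l1norm p (betatilde \<omega>) + l1norm p (etatilde \<omega>)
          \<le> (1 + sqrt \<rho>) / (1 - sqrt \<rho>) * l1norm p (\<lambda>j. betaY j - betahat \<omega> j)}"
    (is "_ \<le> prob ?G")
proof -
  define t where "t = \<rho> * A * sqrt (2 * ln (real p))"
  define TY where "TY j = {\<omega> \<in> space M. t < \<bar>(\<Sum>i<n. colY \<omega> j i * epsY \<omega> i) / (sigmaY * sqrt n)\<bar>}" for j
  define TX where "TX j = {\<omega> \<in> space M. t < \<bar>(\<Sum>i<n. colX \<omega> j i * epsY \<omega> i) / (sigmaY * sqrt n)\<bar>}" for j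
  define E where "E = {\<omega> \<in> space M. (1 - \<rho>) * real n * sigmaY\<^sup>2 \<le> \<bar>(\<Sum>i<n. (epsY \<omega> i)\<^sup>2) - real n * sigmaY\<^sup>2\<bar>}"
  have tails: "prob (TY j) \<le> 2 * real p powr (- (\<rho>\<^sup>2 * A\<^sup>2))" "TY j \<in> events"
    "prob (TX j) \<le> 2 * real p powr (- (\<rho>\<^sup>2 * A\<^sup>2))" "TX j \<in> events" if "j < p" for j
  proof -
    have Y_norm: "\<And>\<omega>. \<omega> \<in> space M \<Longrightarrow> (\<Sum>i<n. (colY \<omega> j i)\<^sup>2) = real n"
      by (rule sum_colY_square[OF _ that])
    have X_norm: "\<And>\<omega>. \<omega> \<in> space M \<Longrightarrow> (\<Sum>i<n. (colX \<omega> j i)\<^sup>2) = real n"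
      by (rule sum_colX_square[OF _ that])
    have "\<rho> \<ge> 0"
      using \<open>0 < \<rho>\<close> by simp
    note Y = noise_score_tail[OF covariate_determined_colY[OF that] Y_norm \<open>n > 0\<close> \<open>p \<ge> 2\<close> \<open>\<rho> \<ge> 0\<close>]
      and X = noise_score_tail[OF covariate_determined_colX[OF that] X_norm \<open>n > 0\<close> \<open>p \<ge> 2\<close> \<open>\<rho> \<ge> 0\<close>]
    show "prob (TY j) \<le> 2 * real p powr (- (\<rho>\<^sup>2 * A\<^sup>2))"
      unfolding TY_def t_def by (rule Y(1))
    show "TY j \<in> events"
      unfolding TY_def t_def by (rule Y(2))
    show "prob (TX j) \<le> 2 * real p powr (- (\<rho>\<^sup>2 * A\<^sup>2))"
      unfolding TX_def t_def by (rule X(1))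
    show "TX j \<in> events"
      unfolding TX_def t_def by (rule X(2))
  qed
  have "(1 - \<rho>) * real n * sigmaY\<^sup>2 > 0"
    using \<open>\<rho> < 1\<close> \<open>n > 0\<close> sigma_pos by simp
  note energy = noise_energy_deviation[OF this, folded E_def]
  have "((1 - \<rho>) * real n * sigmaY\<^sup>2)\<^sup>2 = ((1 - \<rho>)\<^sup>2 * real n) * (real n * sigmaY ^ 4)"
    by (simp add: algebra_simps power2_eq_square power4_eq_xxxx)
  moreover have "(1 - \<rho>)\<^sup>2 * real n > 0" "real n * sigmaY ^ 4 > 0"
    using \<open>\<rho> < 1\<close> \<open>n > 0\<close> sigma_pos by simp_all
  ultimately have "2 * real n * sigmaY ^ 4 / ((1 - \<rho>) * real n * sigmaY\<^sup>2)\<^sup>2 = 2 / ((1 - \<rho>)\<^sup>2 * real n)"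
    using sigma_pos by (simp add: field_simps)
  with energy have E_prob: "prob E \<le> 2 / ((1 - \<rho>)\<^sup>2 * real n)"
    by simp
  have U_event: "(\<Union>j<p. TY j \<union> TX j) \<in> events"
    using tails(2,4) by (intro sets.finite_UN sets.Un) auto
  have "prob (\<Union>j<p. TY j \<union> TX j) \<le> (\<Sum>j<p. prob (TY j \<union> TX j))"
    using tails(2,4) by (intro measure_UNION_le sets.Un) auto
  also have "\<dots> \<le> (\<Sum>j<p. 4 * real p powr (- (\<rho>\<^sup>2 * A\<^sup>2)))"
  proof (rule sum_mono)
    fix j assume "j \<in> {..<p}"
    then have "prob (TY j) + prob (TX j) \<le> 4 * real p powr (- (\<rho>\<^sup>2 * A\<^sup>2))"
      using tails(1,3)[of j] by simp
    then show "prob (TY j \<union> TX j) \<le> 4 * real p powr (- (\<rho>\<^sup>2 * A\<^sup>2))"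
      using measure_Un_le[of "TY j" M "TX j"] tails(2,4)[of j] \<open>j \<in> {..<p}\<close> by simp
  qed
  also have "\<dots> = 4 * real p powr (1 - \<rho>\<^sup>2 * A\<^sup>2)"
    using \<open>p \<ge> 2\<close> by (simp add: powr_diff powr_minus divide_inverse)
  finally have "prob (E \<union> (\<Union>j<p. TY j \<union> TX j)) \<le> 2 / ((1 - \<rho>)\<^sup>2 * real n) + 4 * real p powr (1 - \<rho>\<^sup>2 * A\<^sup>2)"
    using E_prob measure_Un_le[OF energy(2) U_event] by linarith
  moreover have "space M - (E \<union> (\<Union>j<p. TY j \<union> TX j)) \<subseteq> ?G"
  proof safe
    fix \<omega> assume \<omega>: "\<omega> \<in> space M" "\<omega> \<notin> E" "\<omega> \<notin> (\<Union>j<p. TY j \<union> TX j)"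
    show "l1norm p (betatilde \<omega>) + l1norm p (etatilde \<omega>)
        \<le> (1 + sqrt \<rho>) / (1 - sqrt \<rho>) * l1norm p (\<lambda>j. betaY j - betahat \<omega> j)"
    proof (rule joint_l1_le_on_good_event[OF \<omega>(1) \<open>n > 0\<close> \<open>p \<ge> 2\<close> \<open>0 < \<rho>\<close> \<open>\<rho> < 1\<close>])
      have "\<bar>(\<Sum>i<n. (epsY \<omega> i)\<^sup>2) - real n * sigmaY\<^sup>2\<bar> < (1 - \<rho>) * real n * sigmaY\<^sup>2"
        using \<omega>(1,2) by (simp add: E_def)
      moreover have "(1 - \<rho>) * real n * sigmaY\<^sup>2 = real n * sigmaY\<^sup>2 - \<rho> * real n * sigmaY\<^sup>2"
        by (simp add: algebra_simps)
      ultimately show "\<rho> * real n * sigmaY\<^sup>2 < (\<Sum>i<n. (epsY \<omega> i)\<^sup>2)"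
        by linarith
    next
      fix j assume "j < p"
      then have "\<omega> \<notin> TY j" "\<omega> \<notin> TX j"
        using \<omega>(3) by auto
      then show "\<bar>(\<Sum>i<n. colY \<omega> j i * epsY \<omega> i) / (sigmaY * sqrt n)\<bar> \<le> \<rho> * A * sqrt (2 * ln (real p))"
        and "\<bar>(\<Sum>i<n. colX \<omega> j i * epsY \<omega> i) / (sigmaY * sqrt n)\<bar> \<le> \<rho> * A * sqrt (2 * ln (real p))"
        using \<omega>(1) unfolding TY_def TX_def t_def by (simp_all add: not_less)
    qed
  qed
  moreover have "E \<union> (\<Union>j<p. TY j \<union> TX j) \<in> events"
    using energy(2) U_event by (rule sets.Un)
  moreover have "?G \<in> events"
  proof -
    note [measurable] = betatilde_meas etatilde_meas betahat_meas
    show ?thesis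
      unfolding l1norm_def by measurable
  qed
  ultimately show ?thesis
    using finite_measure_mono[of "space M - (E \<union> (\<Union>j<p. TY j \<union> TX j))" ?G]
      prob_compl[of "E \<union> (\<Union>j<p. TY j \<union> TX j)"]
    by linarith
qed

text \<open>
  The bound of \<open>first_step_score_le\<close> below; it does not depend on \<open>n\<close>, which is what makes
  bounded \<open>p\<close> incompatible with the rate for \<open>betahat\<close>.
\<close>
definition first_score_cap :: "real \<Rightarrow> real \<Rightarrow> real" where
  "first_score_cap P C' =
    (let L = A * sqrt (2 * ln P); T = C' * P * sqrt (ln P) in (2 * sigmaY * L + L * T + L + 1 / 2 + T) / sigmaY)"

lemma first_step_residual_eq:
  assumes "\<omega> \<in> space M" and "i < n"
  shows "DY \<omega> i * (Y \<omega> i - mat_diag_vec p (Z \<omega>) (LY \<omega>) (betahat \<omega>) i)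
      = epsY \<omega> i + (\<Sum>j<p. (betaY j - betahat \<omega> j) * colY \<omega> j i)"
  unfolding colY_def by (rule weighted_residual_eq[OF model[OF assms]])

lemma first_step_perturbation_ge:
  assumes "\<omega> \<in> space M" and "n > 0" and "p \<ge> 1"
  defines "r \<equiv> \<lambda>i. DY \<omega> i * (Y \<omega> i - mat_diag_vec p (Z \<omega>) (LY \<omega>) (betahat \<omega>) i)"
  shows "l2norm n r - lam * sqrt n * \<bar>t\<bar> \<le> l2norm n (\<lambda>i. r i - t * colY \<omega> 0 i)"
proof -
  let ?b = "\<lambda>j. betahat \<omega> j + (if j = 0 then t else 0)"
  have "lam \<ge> 0"
    using A_gt \<open>p \<ge> 1\<close> by simp
  have "obj1 n p lam (DY \<omega>) (Z \<omega>) (LY \<omega>) (Y \<omega>) (betahat \<omega>) \<le> obj1 n p lam (DY \<omega>) (Z \<omega>) (LY \<omega>) (Y \<omega>) ?b"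
    by (rule betahat_min[OF \<open>\<omega> \<in> space M\<close>])
  moreover have "obj1 n p lam (DY \<omega>) (Z \<omega>) (LY \<omega>) (Y \<omega>) (betahat \<omega>) = l2norm n r / sqrt n + lam * l1norm p (betahat \<omega>)"
    unfolding obj1_def r_def ..
  moreover have "obj1 n p lam (DY \<omega>) (Z \<omega>) (LY \<omega>) (Y \<omega>) ?b
      = l2norm n (\<lambda>i. r i - t * colY \<omega> 0 i) / sqrt n + lam * l1norm p ?b"
    unfolding obj1_def using \<open>p \<ge> 1\<close>
    by (subst l2norm_cong[where g = "\<lambda>i. r i - t * colY \<omega> 0 i"])
       (simp_all add: mat_diag_vec_add_first r_def colY_def algebra_simps)
  moreover have "lam * l1norm p ?b \<le> lam * (l1norm p (betahat \<omega>) + \<bar>t\<bar>)"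
    by (rule mult_left_mono[OF l1norm_add_first_le \<open>lam \<ge> 0\<close>])
  ultimately have "l2norm n r / sqrt n \<le> l2norm n (\<lambda>i. r i - t * colY \<omega> 0 i) / sqrt n + lam * \<bar>t\<bar>"
    by (simp add: algebra_simps)
  then have "l2norm n r / sqrt n * sqrt n \<le> (l2norm n (\<lambda>i. r i - t * colY \<omega> 0 i) / sqrt n + lam * \<bar>t\<bar>) * sqrt n"
    by (rule mult_right_mono) simp
  then show ?thesis
    using \<open>n > 0\<close> by (simp add: algebra_simps)
qed

lemma rate_l1_le:
  assumes "n > 0" and "1 \<le> p" and "real p < P" and "C' > 0"
    and rate: "l1norm p (\<lambda>j. betahat \<omega> j - betaY j)
      \<le> C' * real (card {j. j < p \<and> betaY j \<noteq> 0}) * sqrt (ln (real p) / real n)"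
  shows "sqrt n * l1norm p (\<lambda>j. betaY j - betahat \<omega> j) \<le> C' * P * sqrt (ln P)"
proof -
  have "0 \<le> ln (real p)" "ln (real p) \<le> ln P"
    using \<open>1 \<le> p\<close> \<open>real p < P\<close> by auto
  have "card {j. j < p \<and> betaY j \<noteq> 0} \<le> card {..<p}"
    by (intro card_mono) auto
  then have "real (card {j. j < p \<and> betaY j \<noteq> 0}) \<le> P"
    using \<open>real p < P\<close> by simp
  moreover have "sqrt n * sqrt (ln (real p) / real n) \<le> sqrt (ln P)"
    using \<open>n > 0\<close> \<open>ln (real p) \<le> ln P\<close> by (simp add: real_sqrt_divide)
  ultimately have "real (card {j. j < p \<and> betaY j \<noteq> 0}) * (sqrt n * sqrt (ln (real p) / real n)) \<le> P * sqrt (ln P)"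
    using \<open>0 \<le> ln (real p)\<close> \<open>1 \<le> p\<close> \<open>real p < P\<close> by (intro mult_mono) auto
  from mult_left_mono[OF this less_imp_le[OF \<open>C' > 0\<close>]]
  have "sqrt n * (C' * real (card {j. j < p \<and> betaY j \<noteq> 0}) * sqrt (ln (real p) / real n))
      \<le> C' * P * sqrt (ln P)"
    by (simp add: mult_ac)
  moreover have "l1norm p (\<lambda>j. betaY j - betahat \<omega> j) = l1norm p (\<lambda>j. betahat \<omega> j - betaY j)"
    unfolding l1norm_def by (simp add: abs_minus_commute)
  ultimately show ?thesis
    using rate mult_left_mono[OF rate, of "sqrt n"] by simp
qed

lemma first_step_score_le:
  assumes "\<omega> \<in> space M" and "n > 0" and "1 \<le> p" and "real p < P" and "C' > 0"
    and rate: "l1norm p (\<lambda>j. betahat \<omega> j - betaY j)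
      \<le> C' * real (card {j. j < p \<and> betaY j \<noteq> 0}) * sqrt (ln (real p) / real n)"
    and energy: "(\<Sum>i<n. (epsY \<omega> i)\<^sup>2) \<le> 4 * real n * sigmaY\<^sup>2"
  shows "\<bar>\<Sum>i<n. colY \<omega> 0 i * epsY \<omega> i\<bar> / (sigmaY * sqrt n) \<le> first_score_cap P C'"
proof -
  define L where "L = A * sqrt (2 * ln P)"
  define T where "T = C' * P * sqrt (ln P)"
  define d where "d j = betaY j - betahat \<omega> j" for j
  define r where "r i = DY \<omega> i * (Y \<omega> i - mat_diag_vec p (Z \<omega>) (LY \<omega>) (betahat \<omega>) i)" for i
  have "sqrt n \<ge> 1" "P > 1"
    using \<open>n > 0\<close> \<open>1 \<le> p\<close> \<open>real p < P\<close> by auto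
  have "ln (real p) \<le> ln P"
    using \<open>1 \<le> p\<close> \<open>real p < P\<close> by simp
  then have lam_le: "0 \<le> lam * sqrt n" "lam * sqrt n \<le> L" "0 \<le> L"
    unfolding lam_mult_sqrt[OF \<open>n > 0\<close>] L_def using A_gt \<open>1 \<le> p\<close> \<open>P > 1\<close> by auto
  have d_le: "sqrt n * l1norm p d \<le> T" "0 \<le> T"
    unfolding d_def T_def using rate_l1_le[OF \<open>n > 0\<close> \<open>1 \<le> p\<close> \<open>real p < P\<close> \<open>C' > 0\<close> rate]
      \<open>C' > 0\<close> \<open>P > 1\<close> by auto
  have col0: "(\<Sum>i<n. (colY \<omega> 0 i)\<^sup>2) = real n"
    using sum_colY_square[OF \<open>\<omega> \<in> space M\<close>] \<open>1 \<le> p\<close> by simp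
  \<comment> \<open>Optimality of \<open>betahat\<close> bounds the score of the first column against the fitted residual \<open>r\<close>,
    which differs from the noise by the first-step error \<open>d\<close>.\<close>
  have score_r: "\<bar>\<Sum>i<n. colY \<omega> 0 i * r i\<bar> \<le> lam * sqrt n * l2norm n r + lam * sqrt n + sqrt n / 2"
  proof (rule sqrt_lasso_score_le[OF \<open>n > 0\<close> col0 lam_le(1)])
    fix t :: real
    show "l2norm n r - lam * sqrt n * \<bar>t\<bar> \<le> l2norm n (\<lambda>i. r i - t * colY \<omega> 0 i)"
      unfolding r_def by (rule first_step_perturbation_ge[OF \<open>\<omega> \<in> space M\<close> \<open>n > 0\<close> \<open>1 \<le> p\<close>])
  qed
  have score_d: "\<bar>\<Sum>i<n. colY \<omega> 0 i * (\<Sum>j<p. d j * colY \<omega> j i)\<bar> \<le> real n * l1norm p d"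
    by (rule abs_sum_mult_normalized_combination_le[OF sum_colY_square[OF \<open>\<omega> \<in> space M\<close>] col0])
  have r_eq: "r i = epsY \<omega> i + (\<Sum>j<p. d j * colY \<omega> j i)" if "i < n" for i
    unfolding r_def d_def by (rule first_step_residual_eq[OF \<open>\<omega> \<in> space M\<close> that])
  then have score_split: "(\<Sum>i<n. colY \<omega> 0 i * epsY \<omega> i)
      = (\<Sum>i<n. colY \<omega> 0 i * r i) - (\<Sum>i<n. colY \<omega> 0 i * (\<Sum>j<p. d j * colY \<omega> j i))"
    unfolding sum_subtractf[symmetric] by (intro sum.cong) (simp_all add: algebra_simps)
  have "l2norm n (epsY \<omega>) \<le> sqrt (4 * real n * sigmaY\<^sup>2)"
    unfolding l2norm_def using energy by simp
  also have "\<dots> = 2 * sigmaY * sqrt n"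
    using sigma_pos by (simp add: real_sqrt_mult)
  finally have eps_le: "l2norm n (epsY \<omega>) \<le> 2 * sigmaY * sqrt n" .
  have "l2norm n r = L2_set (\<lambda>i. epsY \<omega> i + (\<Sum>j<p. d j * colY \<omega> j i)) {..<n}"
    unfolding l2norm_eq_L2_set[symmetric] using r_eq by (rule l2norm_cong)
  also have "\<dots> \<le> l2norm n (epsY \<omega>) + l2norm n (\<lambda>i. \<Sum>j<p. d j * colY \<omega> j i)"
    unfolding l2norm_eq_L2_set by (rule L2_set_triangle_ineq)
  also have "l2norm n (\<lambda>i. \<Sum>j<p. d j * colY \<omega> j i) \<le> sqrt n * l1norm p d"
    by (rule l2norm_combination_le[OF sum_colY_square[OF \<open>\<omega> \<in> space M\<close>]])
  finally have r_le: "l2norm n r \<le> 2 * sigmaY * sqrt n + T"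
    using eps_le d_le by linarith
  have "real n * l1norm p d = sqrt n * (sqrt n * l1norm p d)"
    by (simp add: mult.assoc[symmetric])
  also have "\<dots> \<le> sqrt n * T"
    using d_le by (intro mult_left_mono) auto
  finally have "\<bar>\<Sum>i<n. colY \<omega> 0 i * epsY \<omega> i\<bar> \<le> L * (2 * sigmaY * sqrt n + T) + L + sqrt n / 2 + sqrt n * T"
    using score_split score_r score_d lam_le r_le l2norm_nonneg[of n r]
      mult_mono[OF lam_le(2) r_le lam_le(3) l2norm_nonneg]
    by linarith
  also have "\<dots> \<le> sqrt n * (sigmaY * first_score_cap P C')"
  proof -
    have "1 * (L * T) \<le> sqrt n * (L * T)" "1 * L \<le> sqrt n * L"
      using \<open>sqrt n \<ge> 1\<close> lam_le(3) d_le(2) by (intro mult_right_mono; simp)+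
    moreover have "sigmaY * first_score_cap P C' = 2 * sigmaY * L + L * T + L + 1 / 2 + T"
      unfolding first_score_cap_def L_def T_def Let_def using sigma_pos by simp
    ultimately show ?thesis
      by (simp add: algebra_simps)
  qed
  finally show ?thesis
    using sigma_pos \<open>sqrt n \<ge> 1\<close> by (simp add: field_simps)
qed

lemma prob_rate_violation_ge:
  assumes "n > 0" and "1 \<le> p" and "real p < P" and "C' > 0"
  shows "1 - measure (density lborel std_normal_density) {x. \<bar>x\<bar> \<le> first_score_cap P C'} - 2 / (9 * real n)
      \<le> prob {\<omega> \<in> space M. C' * real (card {j. j < p \<and> betaY j \<noteq> 0}) * sqrt (ln (real p) / real n)
          < l1norm p (\<lambda>j. betahat \<omega> j - betaY j)}"
    (is "_ \<le> prob ?R")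
proof -
  define G where "G = {\<omega> \<in> space M. (\<Sum>i<n. colY \<omega> 0 i * epsY \<omega> i) / (sigmaY * sqrt n)
    \<in> {x. \<bar>x\<bar> \<le> first_score_cap P C'}}"
  define H where "H = {\<omega> \<in> space M. 3 * real n * sigmaY\<^sup>2 \<le> \<bar>(\<Sum>i<n. (epsY \<omega> i)\<^sup>2) - real n * sigmaY\<^sup>2\<bar>}"
  have p_pos: "0 < p"
    using \<open>1 \<le> p\<close> by simp
  have col0: "\<And>\<omega>. \<omega> \<in> space M \<Longrightarrow> (\<Sum>i<n. (colY \<omega> 0 i)\<^sup>2) = real n"
    using \<open>1 \<le> p\<close> by (intro sum_colY_square) simp_all
  have "{x. \<bar>x\<bar> \<le> first_score_cap P C'} \<in> sets borel"
    by measurable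
  note score = noise_score_std_normal[OF covariate_determined_colY[OF p_pos] col0 \<open>n > 0\<close> this, folded G_def]
  have "3 * real n * sigmaY\<^sup>2 > 0"
    using \<open>n > 0\<close> sigma_pos by simp
  note energy = noise_energy_deviation[OF this, folded H_def]
  have "(3 * real n * sigmaY\<^sup>2)\<^sup>2 = (9 * real n) * (real n * sigmaY ^ 4)"
    by (simp add: algebra_simps power2_eq_square power4_eq_xxxx)
  moreover have "real n * sigmaY ^ 4 > 0"
    using \<open>n > 0\<close> sigma_pos by simp
  ultimately have "2 * real n * sigmaY ^ 4 / (3 * real n * sigmaY\<^sup>2)\<^sup>2 = 2 / (9 * real n)"
    using sigma_pos by simp
  with energy(1) have H_prob: "prob H \<le> 2 / (9 * real n)"
    by simp
  have R_event: "?R \<in> events"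
  proof -
    note [measurable] = betahat_meas
    show ?thesis
      unfolding l1norm_def by measurable
  qed
  have "space M \<subseteq> ?R \<union> G \<union> H"
  proof
    fix \<omega> assume \<omega>: "\<omega> \<in> space M"
    show "\<omega> \<in> ?R \<union> G \<union> H"
    proof (rule ccontr)
      assume "\<omega> \<notin> ?R \<union> G \<union> H"
      then have "\<omega> \<notin> ?R" and not_G: "\<omega> \<notin> G" and "\<omega> \<notin> H"
        by simp_all
      then have rate: "l1norm p (\<lambda>j. betahat \<omega> j - betaY j)
          \<le> C' * real (card {j. j < p \<and> betaY j \<noteq> 0}) * sqrt (ln (real p) / real n)"
        and "\<bar>(\<Sum>i<n. (epsY \<omega> i)\<^sup>2) - real n * sigmaY\<^sup>2\<bar> < 3 * real n * sigmaY\<^sup>2"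
        using \<omega> by (simp_all add: H_def not_less)
      then have "(\<Sum>i<n. (epsY \<omega> i)\<^sup>2) \<le> 4 * real n * sigmaY\<^sup>2"
        by (simp add: abs_less_iff)
      from first_step_score_le[OF \<omega> \<open>n > 0\<close> \<open>1 \<le> p\<close> \<open>real p < P\<close> \<open>C' > 0\<close> rate this]
      have "\<omega> \<in> G"
        using \<omega> sigma_pos \<open>n > 0\<close> by (simp add: G_def abs_divide)
      with not_G show False ..
    qed
  qed
  moreover have "?R \<union> G \<union> H \<in> events"
    using R_event score(2) energy(2) by blast
  ultimately have "1 \<le> prob (?R \<union> G \<union> H)"
    using finite_measure_mono[of "space M" "?R \<union> G \<union> H"] prob_space by simp
  also have "\<dots> \<le> prob ?R + prob G + prob H"
    using R_event score(2) energy(2) measure_Un_le[of "?R \<union> G" M H] measure_Un_le[of ?R M G] by simp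
  finally show ?thesis
    using score(1) H_prob by (simp add: G_def)
qed

end

section \<open>Asymptotics\<close>

lemma eventually_not_of_prob_lower_bound:
  fixes r :: "nat \<Rightarrow> real"
  assumes "r \<longlonglongrightarrow> 0" and "\<gamma> > 0"
    and bound: "\<And>n. n > 0 \<Longrightarrow> P n \<Longrightarrow> \<gamma> - c / real n \<le> r n"
  shows "eventually (\<lambda>n. \<not> P n) sequentially"
proof -
  have "eventually (\<lambda>n. r n < \<gamma> / 2) sequentially"
    using order_tendstoD(2)[OF \<open>r \<longlonglongrightarrow> 0\<close>, of "\<gamma> / 2"] \<open>\<gamma> > 0\<close> by simp
  moreover have "eventually (\<lambda>n. c / real n < \<gamma> / 2) sequentially"
    using order_tendstoD(2)[OF lim_const_over_n[of c], of "\<gamma> / 2"] \<open>\<gamma> > 0\<close> by simp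
  moreover note eventually_gt_at_top[of 0]
  ultimately show ?thesis
  proof eventually_elim
    case (elim n)
    show "\<not> P n"
    proof
      assume "P n"
      with elim have "\<gamma> - c / real n \<le> r n"
        by (intro bound) auto
      with elim show False
        by linarith
    qed
  qed
qed

lemma tendsto_one_of_lower_bound:
  fixes q :: "nat \<Rightarrow> real" and p :: "nat \<Rightarrow> nat"
  assumes "\<kappa> > 1"
    and le_1: "\<And>n. q n \<le> 1"
    and p_zero: "\<And>n. p n = 0 \<Longrightarrow> q n = 1"
    and bound: "\<And>n. n > 0 \<Longrightarrow> p n \<ge> 2 \<Longrightarrow> 1 - a / real n - b * real (p n) powr (1 - \<kappa>) \<le> q n"
    and p_large: "\<And>P. eventually (\<lambda>n. p n = 0 \<or> P \<le> real (p n)) sequentially"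
  shows "q \<longlonglongrightarrow> 1"
proof (rule tendstoI)
  fix e :: real assume "e > 0"
  have "((\<lambda>x. b * x powr (1 - \<kappa>)) \<longlongrightarrow> 0) at_top"
    using \<open>\<kappa> > 1\<close> by (intro tendsto_mult_right_zero tendsto_neg_powr filterlim_ident) simp
  then have "eventually (\<lambda>x. b * x powr (1 - \<kappa>) < e / 2) at_top"
    using order_tendstoD(2)[of _ 0 at_top "e / 2"] \<open>e > 0\<close> by simp
  then obtain P where P: "\<And>x. x \<ge> P \<Longrightarrow> b * x powr (1 - \<kappa>) < e / 2"
    unfolding eventually_at_top_linorder by blast
  have "eventually (\<lambda>n. a / real n < e / 2) sequentially"
    using order_tendstoD(2)[OF lim_const_over_n[of a], of "e / 2"] \<open>e > 0\<close> by simp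
  with p_large[of "max P 2"] eventually_gt_at_top[of 0]
  show "eventually (\<lambda>n. dist (q n) 1 < e) sequentially"
  proof eventually_elim
    case (elim n)
    show ?case
    proof (cases "p n = 0")
      case False
      with elim have "p n \<ge> 2" "real (p n) \<ge> P"
        by auto
      with bound[of n] P[of "real (p n)"] elim le_1[of n] show ?thesis
        by (simp add: dist_real_def)
    qed (use p_zero \<open>e > 0\<close> in simp)
  qed
qed

lemma eventually_dimension_large:
  assumes models: "\<And>n. two_step_sqrt_lasso (M n) n (p n) (Y n) (Z n) (DY n) (DX n) (LY n) (LX n) (betaY n)
      (epsY n) sigmaY A (betahat n) (betatilde n) (etatilde n)"
    and "C' > 0"
    and rate_lim: "(\<lambda>n. measure (M n) {\<omega> \<in> space (M n).
      C' * real (card {j. j < p n \<and> betaY n j \<noteq> 0}) * sqrt (ln (real (p n)) / real n)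
        < l1norm (p n) (\<lambda>j. betahat n \<omega> j - betaY n j)}) \<longlonglongrightarrow> 0"
  shows "eventually (\<lambda>n. p n = 0 \<or> P \<le> real (p n)) sequentially"
proof -
  let ?\<gamma> = "1 - measure (density lborel std_normal_density)
    {x. \<bar>x\<bar> \<le> two_step_sqrt_lasso.first_score_cap sigmaY A P C'}"
  have "eventually (\<lambda>n. \<not> (1 \<le> p n \<and> real (p n) < P)) sequentially"
  proof (rule eventually_not_of_prob_lower_bound[OF rate_lim])
    show "?\<gamma> > 0"
      using std_normal_centered_interval_lt_1 by simp
    show "?\<gamma> - (2 / 9) / real n \<le> measure (M n) {\<omega> \<in> space (M n).
        C' * real (card {j. j < p n \<and> betaY n j \<noteq> 0}) * sqrt (ln (real (p n)) / real n)
          < l1norm (p n) (\<lambda>j. betahat n \<omega> j - betaY n j)}"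
      if "n > 0" and "1 \<le> p n \<and> real (p n) < P" for n
      using two_step_sqrt_lasso.prob_rate_violation_ge[OF models that(1) _ _ \<open>C' > 0\<close>] that(2) by simp
  qed
  then show ?thesis
    by eventually_elim auto
qed

lemma tendsto_prob_joint_l1_le_1:
  assumes models: "\<And>n. two_step_sqrt_lasso (M n) n (p n) (Y n) (Z n) (DY n) (DX n) (LY n) (LX n) (betaY n)
      (epsY n) sigmaY A (betahat n) (betatilde n) (etatilde n)"
    and "0 < \<rho>" and "\<rho> < 1" and "1 < \<rho>\<^sup>2 * A\<^sup>2"
    and p_large: "\<And>P. eventually (\<lambda>n. p n = 0 \<or> P \<le> real (p n)) sequentially"
  shows "(\<lambda>n. measure (M n) {\<omega> \<in> space (M n). l1norm (p n) (betatilde n \<omega>) + l1norm (p n) (etatilde n \<omega>)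
      \<le> (1 + sqrt \<rho>) / (1 - sqrt \<rho>) * l1norm (p n) (\<lambda>j. betaY n j - betahat n \<omega> j)}) \<longlonglongrightarrow> 1"
proof (rule tendsto_one_of_lower_bound[OF \<open>1 < \<rho>\<^sup>2 * A\<^sup>2\<close> _ _ _ p_large])
  show "1 - 2 / (1 - \<rho>)\<^sup>2 / real n - 4 * real (p n) powr (1 - \<rho>\<^sup>2 * A\<^sup>2) \<le> measure (M n) {\<omega> \<in> space (M n).
      l1norm (p n) (betatilde n \<omega>) + l1norm (p n) (etatilde n \<omega>)
        \<le> (1 + sqrt \<rho>) / (1 - sqrt \<rho>) * l1norm (p n) (\<lambda>j. betaY n j - betahat n \<omega> j)}"
    if "n > 0" and "p n \<ge> 2" for n
    using two_step_sqrt_lasso.prob_joint_l1_le[OF models that \<open>0 < \<rho>\<close> \<open>\<rho> < 1\<close>] by simp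
  interpret prob_space "M n" for n
    using models by (rule two_step_sqrt_lasso.axioms(1))
  show "measure (M n) {\<omega> \<in> space (M n). l1norm (p n) (betatilde n \<omega>) + l1norm (p n) (etatilde n \<omega>)
      \<le> (1 + sqrt \<rho>) / (1 - sqrt \<rho>) * l1norm (p n) (\<lambda>j. betaY n j - betahat n \<omega> j)} \<le> 1" for n
    by (rule prob_le_1)
  show "measure (M n) {\<omega> \<in> space (M n). l1norm (p n) (betatilde n \<omega>) + l1norm (p n) (etatilde n \<omega>)
      \<le> (1 + sqrt \<rho>) / (1 - sqrt \<rho>) * l1norm (p n) (\<lambda>j. betaY n j - betahat n \<omega> j)} = 1"
    if "p n = 0" for n
    using that prob_space by (simp add: l1norm_def)
qed

theorem lemma1:
  fixes M :: "nat \<Rightarrow> 'a measure"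
    and p :: "nat \<Rightarrow> nat"
    and Y :: "nat \<Rightarrow> 'a \<Rightarrow> nat \<Rightarrow> real"
    and Z :: "nat \<Rightarrow> 'a \<Rightarrow> nat \<Rightarrow> nat \<Rightarrow> real"
    and DY DX :: "nat \<Rightarrow> 'a \<Rightarrow> nat \<Rightarrow> real"
    and LY LX :: "nat \<Rightarrow> 'a \<Rightarrow> nat \<Rightarrow> real"
    and betaY :: "nat \<Rightarrow> nat \<Rightarrow> real"
    and epsY :: "nat \<Rightarrow> 'a \<Rightarrow> nat \<Rightarrow> real"
    and sigmaY A :: real
    and betahat betatilde etatilde :: "nat \<Rightarrow> 'a \<Rightarrow> nat \<Rightarrow> real"
  assumes prob: "\<And>n. prob_space (M n)"
    and norm_Y: "\<And>n \<omega> j. \<omega> \<in> space (M n) \<Longrightarrow> j < p n \<Longrightarrow>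
          (\<Sum>i<n. (DY n \<omega> i * Z n \<omega> i j * LY n \<omega> j)\<^sup>2) = real n"
    and norm_X: "\<And>n \<omega> j. \<omega> \<in> space (M n) \<Longrightarrow> j < p n \<Longrightarrow>
          (\<Sum>i<n. (DX n \<omega> i * Z n \<omega> i j * LX n \<omega> j)\<^sup>2) = real n"
    and model: "\<And>n \<omega> i. \<omega> \<in> space (M n) \<Longrightarrow> i < n \<Longrightarrow>
          DY n \<omega> i * Y n \<omega> i
            = DY n \<omega> i * mat_diag_vec (p n) (Z n \<omega>) (LY n \<omega>) (betaY n) i + epsY n \<omega> i"
    and sigma_pos: "sigmaY > 0"
    and eps_indep_cov: "\<And>n. prob_space.indep_var (M n)
          (Pi\<^sub>M (cov_set n (p n)) (\<lambda>_. borel))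
          (\<lambda>\<omega>. restrict (cov_val (Z n \<omega>) (DY n \<omega>) (DX n \<omega>) (LY n \<omega>) (LX n \<omega>)) (cov_set n (p n)))
          (Pi\<^sub>M (CE ` {..<n}) (\<lambda>_. borel))
          (\<lambda>\<omega>. restrict (err_val (epsY n \<omega>)) (CE ` {..<n}))"
    and eps_indep: "\<And>n. prob_space.indep_vars (M n) (\<lambda>_. borel) (\<lambda>i \<omega>. epsY n \<omega> i) {..<n}"
    and eps_normal: "\<And>n i. i < n \<Longrightarrow>
          distributed (M n) lborel (\<lambda>\<omega>. epsY n \<omega> i) (normal_density 0 sigmaY)"
    and A_gt: "A > 1"
    and betahat_meas: "\<And>n j. (\<lambda>\<omega>. betahat n \<omega> j) \<in> borel_measurable (M n)"
    and betatilde_meas: "\<And>n j. (\<lambda>\<omega>. betatilde n \<omega> j) \<in> borel_measurable (M n)"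
    and etatilde_meas: "\<And>n j. (\<lambda>\<omega>. etatilde n \<omega> j) \<in> borel_measurable (M n)"
    and betahat_min: "\<And>n \<omega> b. \<omega> \<in> space (M n) \<Longrightarrow>
          obj1 n (p n) (A * sqrt (2 * ln (real (p n)) / real n)) (DY n \<omega>) (Z n \<omega>) (LY n \<omega>) (Y n \<omega>)
               (betahat n \<omega>)
          \<le> obj1 n (p n) (A * sqrt (2 * ln (real (p n)) / real n)) (DY n \<omega>) (Z n \<omega>) (LY n \<omega>) (Y n \<omega>) b"
    and tilde_min: "\<And>n \<omega> b u. \<omega> \<in> space (M n) \<Longrightarrow>
          obj2 n (p n) (A * sqrt (2 * ln (real (p n)) / real n)) (DY n \<omega>) (DX n \<omega>) (Z n \<omega>)
               (LY n \<omega>) (LX n \<omega>)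
               (\<lambda>i. Y n \<omega> i - mat_diag_vec (p n) (Z n \<omega>) (LY n \<omega>) (betahat n \<omega>) i)
               (betatilde n \<omega>) (etatilde n \<omega>)
          \<le> obj2 n (p n) (A * sqrt (2 * ln (real (p n)) / real n)) (DY n \<omega>) (DX n \<omega>) (Z n \<omega>)
               (LY n \<omega>) (LX n \<omega>)
               (\<lambda>i. Y n \<omega> i - mat_diag_vec (p n) (Z n \<omega>) (LY n \<omega>) (betahat n \<omega>) i) b u"
    and rate: "\<exists>C'>0. (\<lambda>n. measure (M n) {\<omega> \<in> space (M n).
          l1norm (p n) (\<lambda>j. betahat n \<omega> j - betaY n j)
            > C' * real (card {j. j < p n \<and> betaY n j \<noteq> 0}) * sqrt (ln (real (p n)) / real n)})
          \<longlonglongrightarrow> 0"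
    and sparsity: "(\<lambda>n. real (card {j. j < p n \<and> betaY n j \<noteq> 0}) * ln (real (p n)) / real n)
          \<longlonglongrightarrow> 0"
  shows "\<exists>C>0. (\<lambda>n. measure (M n) {\<omega> \<in> space (M n).
          l1norm (p n) (betatilde n \<omega>) + l1norm (p n) (etatilde n \<omega>)
            \<le> C * l1norm (p n) (\<lambda>j. betaY n j - betahat n \<omega> j)})
          \<longlonglongrightarrow> 1"
proof -
  have models: "two_step_sqrt_lasso (M n) n (p n) (Y n) (Z n) (DY n) (DX n) (LY n) (LX n) (betaY n) (epsY n)
      sigmaY A (betahat n) (betatilde n) (etatilde n)" for n
    by (intro two_step_sqrt_lasso.intro two_step_sqrt_lasso_axioms.intro) (rule assms; assumption)+
  define \<rho> where "\<rho> = (1 + 1 / A) / 2"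
  have "0 < \<rho>" "\<rho> < 1" "1 < \<rho> * A"
    using A_gt by (auto simp: \<rho>_def field_simps)
  then have "1 < \<rho>\<^sup>2 * A\<^sup>2"
    by (metis less_1_mult power_mult_distrib power2_eq_square)
  obtain C' where "C' > 0" and "(\<lambda>n. measure (M n) {\<omega> \<in> space (M n).
      C' * real (card {j. j < p n \<and> betaY n j \<noteq> 0}) * sqrt (ln (real (p n)) / real n)
        < l1norm (p n) (\<lambda>j. betahat n \<omega> j - betaY n j)}) \<longlonglongrightarrow> 0"
    using rate by blast
  from eventually_dimension_large[OF models this]
  have "(\<lambda>n. measure (M n) {\<omega> \<in> space (M n). l1norm (p n) (betatilde n \<omega>) + l1norm (p n) (etatilde n \<omega>)
      \<le> (1 + sqrt \<rho>) / (1 - sqrt \<rho>) * l1norm (p n) (\<lambda>j. betaY n j - betahat n \<omega> j)}) \<longlonglongrightarrow> 1"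
    by (rule tendsto_prob_joint_l1_le_1[OF models \<open>0 < \<rho>\<close> \<open>\<rho> < 1\<close> \<open>1 < \<rho>\<^sup>2 * A\<^sup>2\<close>])
  moreover have "(1 + sqrt \<rho>) / (1 - sqrt \<rho>) > 0"
    using \<open>0 < \<rho>\<close> \<open>\<rho> < 1\<close> by (intro divide_pos_pos add_pos_pos) auto
  ultimately show ?thesis
    by blast
qed

end
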